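(* Let $(W,S)$ be a Coxeter system with $S=D$ finite and $W$ infinite. Let $\mathrm{Virg}(D)$ be the least common multiple (in $\mathbb{Q}[t]$, normalized to be monic) of the polynomials $W_X(t)$ over all $X\subsetneq D$ with $W_X$ finite. Then $\mathrm{Virg}(D)/W(t)$ is a polynomial; i.e. $W(t)$ can be written as a rational fraction whose numerator is $\mathrm{Virg}(D)$.
   Context: For $X\subseteq S$, $W_X$ is the special subgroup generated by $X$ and $W_X(t)=\sum_{g\in W_X}t^{l(g)}$ its Poincaré series ($l$ = word length with respect to $X$, which agrees with that with respect to $S$); for finite $W_X$ it is a polynomial of the form $[m_1+1]\cdots[m_k+1]$ with $[n]=1+t+\dots+t^{n-1}$, in particular monic with constant term $1$. *)

theory Defs
  imports "HOL-Computational_Algebra.Computational_Algebra" "HOL-Library.Extended_Nat" "HOL-Computational_Algebra.Field_as_Ring"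
begin

text \<open>Coxeter matrix on the generating set S; the value \<infinity> means "no relation".\<close>
definition is_coxeter_matrix :: "'a set \<Rightarrow> ('a \<Rightarrow> 'a \<Rightarrow> enat) \<Rightarrow> bool" where
  "is_coxeter_matrix S m \<longleftrightarrow>
     (\<forall>s\<in>S. m s s = 1) \<and> (\<forall>s\<in>S. \<forall>t\<in>S. m s t = m t s) \<and>
     (\<forall>s\<in>S. \<forall>t\<in>S. s \<noteq> t \<longrightarrow> 2 \<le> m s t)"

definition coxeter_relators :: "'a set \<Rightarrow> ('a \<Rightarrow> 'a \<Rightarrow> enat) \<Rightarrow> 'a list set" where
  "coxeter_relators S m =
     {concat (replicate k [s, t]) | s t k. s \<in> S \<and> t \<in> S \<and> m s t = enat k}"

inductive coxeter_eq :: "'a set \<Rightarrow> ('a \<Rightarrow> 'a \<Rightarrow> enat) \<Rightarrow> 'a list \<Rightarrow> 'a list \<Rightarrow> bool"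
  for S m where
  refl: "coxeter_eq S m w w"
| sym: "coxeter_eq S m v w \<Longrightarrow> coxeter_eq S m w v"
| trans: "coxeter_eq S m u v \<Longrightarrow> coxeter_eq S m v w \<Longrightarrow> coxeter_eq S m u w"
| rel: "r \<in> coxeter_relators S m \<Longrightarrow> coxeter_eq S m (u @ r @ v) (u @ v)"

text \<open>The element of W represented by a word.\<close>
definition cox_class :: "'a set \<Rightarrow> ('a \<Rightarrow> 'a \<Rightarrow> enat) \<Rightarrow> 'a list \<Rightarrow> 'a list set" where
  "cox_class S m w = {v \<in> lists S. coxeter_eq S m w v}"

text \<open>The special subgroup W_X (W itself is W_S).\<close>
definition special_subgroup :: "'a set \<Rightarrow> ('a \<Rightarrow> 'a \<Rightarrow> enat) \<Rightarrow> 'a set \<Rightarrow> 'a list set set" where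
  "special_subgroup S m X = cox_class S m ` lists X"

definition cox_length :: "'a set \<Rightarrow> ('a \<Rightarrow> 'a \<Rightarrow> enat) \<Rightarrow> 'a set \<Rightarrow> 'a list set \<Rightarrow> nat" where
  "cox_length S m X c = (LEAST n. \<exists>w\<in>lists X. cox_class S m w = c \<and> length w = n)"

definition poincare_fps :: "'a set \<Rightarrow> ('a \<Rightarrow> 'a \<Rightarrow> enat) \<Rightarrow> 'a set \<Rightarrow> rat fps" where
  "poincare_fps S m X =
     Abs_fps (\<lambda>n. of_nat (card {c \<in> special_subgroup S m X. cox_length S m X c = n}))"

text \<open>Poincare polynomial of W_X (meaningful when W_X is finite).\<close>
definition poincare_poly :: "'a set \<Rightarrow> ('a \<Rightarrow> 'a \<Rightarrow> enat) \<Rightarrow> 'a set \<Rightarrow> rat poly" where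
  "poincare_poly S m X = (\<Sum>c\<in>special_subgroup S m X. monom 1 (cox_length S m X c))"

definition virg :: "'a set \<Rightarrow> ('a \<Rightarrow> 'a \<Rightarrow> enat) \<Rightarrow> rat poly" where
  "virg S m = Lcm {poincare_poly S m X | X. X \<subset> S \<and> finite (special_subgroup S m X)}"

end

theory Submission
  imports Defs
begin

text \<open>
  Everything is developed from the presentation, on words over \<open>S\<close>:
  \<^item> parity of reflection counts is invariant under the Coxeter relations; this yields the
    deletion and exchange conditions and a well-behaved length function;
  \<^item> every coset \<open>u W\<^sub>Y\<close> has a unique representative of minimal length, and lengths add
    along \<open>u \<cdot> v\<close> for \<open>v \<in> W\<^sub>Y\<close>; such representatives are characterised by their ascents;
  \<^item> an element of \<open>W\<^sub>Z\<close> having every generator of \<open>Z\<close> as a descent bounds all lengths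
    in \<open>W\<^sub>Z\<close>, so \<open>W\<^sub>Z\<close> is finite (reduction to the dihedral case);
  \<^item> hence \<open>W\<^sub>Z(t) = W\<^sub>Z\<^sup>Y(t) W\<^sub>Y(t)\<close> and, when \<open>W\<^sub>Z\<close> is infinite,
    \<open>\<Sum>\<^sub>Y\<^sub>\<subseteq>\<^sub>Z (-1)\<^bsup>|Y|\<^esup> / W\<^sub>Y(t) = 0\<close>;
  \<^item> an induction on \<open>|Z|\<close> using this identity shows that any common multiple of the
    finite \<open>W\<^sub>Y(t)\<close>, \<open>Y \<subseteq> Z\<close>, is a polynomial multiple of \<open>W\<^sub>Z(t)\<close>, and the theorem follows.
\<close>

text \<open>Alternating words \<open>a b a b \<dots>\<close> of length \<open>n\<close>; the relators are the alternating words
  of even length \<open>2 m(s,t)\<close>, and reduced words in a dihedral subgroup are alternating.\<close>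

fun alt_word :: "'a \<Rightarrow> 'a \<Rightarrow> nat \<Rightarrow> 'a list" where
  "alt_word a b 0 = []"
| "alt_word a b (Suc n) = a # alt_word b a n"

lemma length_alt_word[simp]: "length (alt_word a b n) = n"
  by (induction n arbitrary: a b) auto

lemma set_alt_word: "set (alt_word a b n) \<subseteq> {a, b}"
  by (induction n arbitrary: a b) auto

lemma alt_word_snoc: "alt_word a b n @ [if even n then a else b] = alt_word a b (Suc n)"
  by (induction n arbitrary: a b) auto

lemma alt_word_add:
  "alt_word a b (j + n) = alt_word a b j @ alt_word (if even j then a else b) (if even j then b else a) n"
  by (induction j arbitrary: a b) auto

lemma take_alt_word: "take j (alt_word a b n) = alt_word a b (min j n)"
proof (induction n arbitrary: a b j)
  case (Suc n) then show ?case by (cases j) auto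
qed simp

lemma concat_replicate_alt_word: "concat (replicate k [s, t]) = alt_word s t (2 * k)"
  by (induction k) (auto simp: numeral_2_eq_2)

lemma alt_word_char:
  assumes "x \<noteq> y" "set w \<subseteq> {x, y}" "\<forall>i. Suc i < length w \<longrightarrow> w ! i \<noteq> w ! Suc i"
    and "w \<noteq> []" "hd w = x"
  shows "w = alt_word x y (length w)"
  using assms
proof (induction w arbitrary: x y)
  case (Cons a w)
  show ?case
  proof (cases w)
    case Nil then show ?thesis using Cons by simp
  next
    case (Cons b w')
    have "b \<noteq> a" using Cons.prems(3) Cons by (metis length_Cons nth_Cons_0 nth_Cons_Suc zero_less_Suc Suc_less_eq)
    then have b: "b = y" using Cons.prems Cons by auto
    have adj: "\<forall>i. Suc i < length w \<longrightarrow> w ! i \<noteq> w ! Suc i"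
      using Cons.prems(3) by (metis Suc_less_eq length_Cons nth_Cons_Suc)
    have "w = alt_word y x (length w)"
      using Cons.IH[of y x] Cons.prems adj b Cons by auto
    then show ?thesis using Cons.prems by simp
  qed
qed simp

text \<open>The \<open>i\<close>-th reflection word of \<open>w = s\<^sub>0 \<dots> s\<^sub>n\<^sub>-\<^sub>1\<close>: the conjugate
  \<open>s\<^sub>0 \<dots> s\<^sub>i\<^sub>-\<^sub>1 s\<^sub>i s\<^sub>i\<^sub>-\<^sub>1 \<dots> s\<^sub>0\<close>.  The product \<open>t\<^sub>i \<cdot> w\<close> deletes the letter \<open>s\<^sub>i\<close> from \<open>w\<close>.\<close>

definition refl_word :: "'a list \<Rightarrow> nat \<Rightarrow> 'a list" where
  "refl_word w i = take i w @ [w ! i] @ rev (take i w)"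

lemma refl_word_append_left: "i < length a \<Longrightarrow> refl_word (a @ b) i = refl_word a i"
  by (simp add: refl_word_def nth_append)

lemma refl_word_append_right:
  "i < length b \<Longrightarrow> refl_word (a @ b) (length a + i) = a @ refl_word b i @ rev a"
  by (simp add: refl_word_def nth_append)

lemma refl_word_alt_word: "j < n \<Longrightarrow> refl_word (alt_word a b n) j = alt_word a b (2 * j + 1)"
proof (induction n arbitrary: a b j)
  case (Suc n)
  show ?case
  proof (cases j)
    case 0 then show ?thesis by (simp add: refl_word_def)
  next
    case (Suc j')
    with Suc.prems have j': "j' < n" by simp
    have "refl_word (alt_word a b (Suc n)) j = a # refl_word (alt_word b a n) j' @ [a]"
      using Suc j' by (simp add: refl_word_def)
    also have "\<dots> = a # alt_word b a (2 * j' + 1) @ [a]" using Suc.IH[OF j'] by simp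
    also have "alt_word b a (2 * j' + 1) @ [a] = alt_word b a (Suc (2 * j' + 1))"
      using alt_word_snoc[of b a "2 * j' + 1"] by simp
    finally show ?thesis using Suc by simp
  qed
qed simp

lemma split_at_two_positions: "i < j \<Longrightarrow> j < length w \<Longrightarrow>
  \<exists>p a q b z. w = p @ a # q @ b # z \<and> length p = i \<and> length q = j - Suc i"
proof -
  assume ij: "i < j" "j < length w"
  have e1: "w = take j w @ w ! j # drop (Suc j) w" by (rule id_take_nth_drop[OF ij(2)])
  have "i < length (take j w)" using ij by simp
  from id_take_nth_drop[OF this]
  have e2: "take j w = take i w @ w ! i # take (j - Suc i) (drop (Suc i) w)"
    using ij by (simp add: drop_take min_def)
  have "w = take i w @ w ! i # take (j - Suc i) (drop (Suc i) w) @ w ! j # drop (Suc j) w"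
    using e1 e2 by (metis append.assoc append_Cons)
  then show ?thesis using ij
    by (intro exI[of _ "take i w"] exI[of _ "w ! i"] exI[of _ "take (j - Suc i) (drop (Suc i) w)"]
        exI[of _ "w ! j"] exI[of _ "drop (Suc j) w"]) auto
qed

text \<open>The alternating sum \<open>\<Sum>\<^sub>Y\<^sub>\<subseteq>\<^sub>A (-1)\<^bsup>|Y|\<^esup>\<close> vanishes for finite nonempty \<open>A\<close>:
  it is the expansion of \<open>\<Prod>\<^sub>x\<^sub>\<in>\<^sub>A (1 - 1)\<close>.\<close>

lemma alternating_Pow:
  assumes "finite A" "a \<in> A"
  shows "(\<Sum>Y\<in>Pow A. (-1::'b::comm_ring_1) ^ card Y) = 0"
proof -
  have "card A \<noteq> 0" using assms by auto
  moreover have "(\<Prod>x\<in>A. (1::'b) - 1) = (\<Sum>Y\<in>Pow A. (-1) ^ card Y)"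
    using prod_diff_conv_sum[OF assms(1), of "\<lambda>_. 1" "\<lambda>_. 1"] by simp
  ultimately show ?thesis by (simp add: power_0_left)
qed

text \<open>A Coxeter system given by a Coxeter matrix \<open>m\<close> on the generating set \<open>S\<close>;
  group elements are represented by words, \<open>v \<simeq> w\<close> meaning equality in \<open>W\<close>.\<close>

locale coxeter_system =
  fixes S :: "'a set" and m :: "'a \<Rightarrow> 'a \<Rightarrow> enat"
  assumes coxeter_matrix: "is_coxeter_matrix S m"
begin

abbreviation ceq (infix "\<simeq>" 50) where "v \<simeq> w \<equiv> coxeter_eq S m v w"

lemma ceq_refl[simp, intro]: "w \<simeq> w" by (rule coxeter_eq.refl)
lemma ceq_sym: "v \<simeq> w \<Longrightarrow> w \<simeq> v" by (rule coxeter_eq.sym)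
lemma ceq_trans[trans]: "u \<simeq> v \<Longrightarrow> v \<simeq> w \<Longrightarrow> u \<simeq> w" by (rule coxeter_eq.trans)

lemma ceq_cong: "v \<simeq> w \<Longrightarrow> a @ v @ b \<simeq> a @ w @ b"
proof (induction rule: coxeter_eq.induct)
  case (rel r u v)
  from coxeter_eq.rel[OF rel, of "a @ u" "v @ b"] show ?case by simp
qed (auto intro: ceq_sym ceq_trans)

lemma ceq_app: "a \<simeq> b \<Longrightarrow> c \<simeq> d \<Longrightarrow> a @ c \<simeq> b @ d"
  using ceq_cong[of a b "[]" c] ceq_cong[of c d b "[]"] by (auto intro: ceq_trans)

lemma ceq_app_l: "c \<simeq> d \<Longrightarrow> a @ c \<simeq> a @ d" by (rule ceq_app) auto
lemma ceq_app_r: "a \<simeq> b \<Longrightarrow> a @ c \<simeq> b @ c" by (rule ceq_app) auto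

lemma relator_trivial: "r \<in> coxeter_relators S m \<Longrightarrow> r \<simeq> []"
  using coxeter_eq.rel[of r S m "[]" "[]"] by simp

lemma gen_square_relator: "s \<in> S \<Longrightarrow> [s, s] \<in> coxeter_relators S m"
  using coxeter_matrix unfolding coxeter_relators_def is_coxeter_matrix_def
  by (auto intro!: exI[of _ s] exI[of _ 1] simp: one_enat_def)

lemma gen_square: "s \<in> S \<Longrightarrow> [s, s] \<simeq> []" by (rule relator_trivial[OF gen_square_relator])

lemma gen_square_cancel: "s \<in> S \<Longrightarrow> a @ s # s # b \<simeq> a @ b"
  using ceq_cong[OF gen_square, of s a b] by simp

text \<open>The relator set is closed under reversal (by symmetry of \<open>m\<close>), so reversal of words
  respects equality in \<open>W\<close>; reversal of a word over \<open>S\<close> represents its inverse.\<close>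

lemma rev_concat_replicate: "rev (concat (replicate k [s, t])) = concat (replicate k [t, s])"
proof (induction k)
  case (Suc k)
  have "concat (replicate k [t, s]) @ [t, s] = concat (replicate (Suc k) [t, s])"
    by (simp add: replicate_append_same[symmetric])
  then show ?case using Suc by simp
qed simp

lemma relator_rev: "r \<in> coxeter_relators S m \<Longrightarrow> rev r \<in> coxeter_relators S m"
  using coxeter_matrix unfolding coxeter_relators_def is_coxeter_matrix_def
  by (auto simp: rev_concat_replicate) (metis)

lemma ceq_rev: "v \<simeq> w \<Longrightarrow> rev v \<simeq> rev w"
proof (induction rule: coxeter_eq.induct)
  case (rel r u v)
  from coxeter_eq.rel[OF relator_rev[OF rel], of "rev v" "rev u"] show ?case by simp
qed (auto intro: ceq_sym ceq_trans)

lemma word_rev_inverse: "w \<in> lists S \<Longrightarrow> w @ rev w \<simeq> []"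
proof (induction w)
  case (Cons s w)
  then have "[s] @ (w @ rev w) @ [s] \<simeq> [s] @ [] @ [s]" by (intro ceq_cong) auto
  also have "[s] @ [] @ [s] \<simeq> []" using gen_square Cons by simp
  finally show ?case by simp
qed simp

lemma rev_word_inverse: "w \<in> lists S \<Longrightarrow> rev w @ w \<simeq> []"
  using word_rev_inverse[of "rev w"] by (simp add: in_lists_conv_set)

lemma cancel_left: "c \<in> lists S \<Longrightarrow> c @ x \<simeq> c @ y \<Longrightarrow> x \<simeq> y"
proof -
  assume c: "c \<in> lists S" and h: "c @ x \<simeq> c @ y"
  have "x \<simeq> (rev c @ c) @ x" using ceq_app_r[OF rev_word_inverse[OF c], of x] by (simp add: ceq_sym)
  also have "\<dots> = rev c @ (c @ x)" by simp
  also have "\<dots> \<simeq> rev c @ (c @ y)" using h by (rule ceq_app_l)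
  also have "\<dots> = (rev c @ c) @ y" by simp
  also have "\<dots> \<simeq> y" using ceq_app_r[OF rev_word_inverse[OF c], of y] by simp
  finally show ?thesis .
qed

lemma move_right: "c \<in> lists S \<Longrightarrow> x @ c \<simeq> y \<Longrightarrow> x \<simeq> y @ rev c"
proof -
  assume c: "c \<in> lists S" and h: "x @ c \<simeq> y"
  have "x \<simeq> x @ (c @ rev c)" using ceq_app_l[OF word_rev_inverse[OF c], of x] by (simp add: ceq_sym)
  also have "\<dots> = (x @ c) @ rev c" by simp
  also have "\<dots> \<simeq> y @ rev c" using h by (rule ceq_app_r)
  finally show ?thesis .
qed

lemma cancel_right: "c \<in> lists S \<Longrightarrow> x @ c \<simeq> y @ c \<Longrightarrow> x \<simeq> y"
  using move_right[of c x "y @ c"] ceq_app_l[OF word_rev_inverse, of c y]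
  by (auto intro: ceq_trans)

text \<open>Its parity is an invariant of the element of \<open>W\<close> represented by \<open>w\<close>;
  this replaces the usual action of \<open>W\<close> on \<open>T \<times> {\<plusminus>1}\<close>.\<close>

definition refl_count :: "'a list \<Rightarrow> 'a list \<Rightarrow> 'a list \<Rightarrow> nat" where
  "refl_count c w x = card {i. i < length w \<and> c @ refl_word w i @ rev c \<simeq> x}"

lemma refl_count_append: "refl_count c (a @ b) x = refl_count c a x + refl_count (c @ a) b x"
proof -
  let ?A = "{i. i < length a \<and> c @ refl_word a i @ rev c \<simeq> x}"
  let ?B = "{i. i < length b \<and> (c @ a) @ refl_word b i @ rev (c @ a) \<simeq> x}"
  have eq: "{i. i < length (a @ b) \<and> c @ refl_word (a @ b) i @ rev c \<simeq> x} = ?A \<union> (\<lambda>i. length a + i) ` ?B"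
  proof (rule set_eqI)
    fix i
    show "i \<in> {i. i < length (a @ b) \<and> c @ refl_word (a @ b) i @ rev c \<simeq> x} \<longleftrightarrow> i \<in> ?A \<union> (\<lambda>i. length a + i) ` ?B"
    proof (cases "i < length a")
      case True then show ?thesis by (auto simp: refl_word_append_left)
    next
      case False
      then obtain j where j: "i = length a + j" by (metis add_diff_inverse)
      show ?thesis using False j by (auto simp: refl_word_append_right)
    qed
  qed
  have "card (?A \<union> (\<lambda>i. length a + i) ` ?B) = card ?A + card ?B"
    by (subst card_Un_disjoint) (auto simp: card_image inj_on_def)
  with eq show ?thesis unfolding refl_count_def by simp
qed

lemma trivial_cancel: "r \<simeq> [] \<Longrightarrow> a @ r @ b \<simeq> a @ b"
  using ceq_cong[of r "[]" a b] by simp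

text \<open>In a relator \<open>(s t)\<^sup>k\<close> the reflection sequence has period \<open>k\<close> (up to the trivial
  prefix \<open>r\<close>), so every reflection occurs an even number of times.\<close>

lemma refl_word_relator_shift:
  assumes "r = alt_word s t (2 * k)" "i < k"
  shows "refl_word r (i + k) = r @ refl_word r i"
proof -
  have "refl_word r (i + k) = alt_word s t (2 * (i + k) + 1)" using assms by (simp add: refl_word_alt_word)
  also have "\<dots> = alt_word s t (2 * k + (2 * i + 1))" by (simp add: algebra_simps)
  also have "\<dots> = r @ alt_word s t (2 * i + 1)"
    using alt_word_add[of s t "2 * k" "2 * i + 1"] assms by (simp del: alt_word.simps)
  also have "alt_word s t (2 * i + 1) = refl_word r i" using assms by (simp add: refl_word_alt_word)
  finally show ?thesis .
qed

lemma refl_count_relator_even: "r \<in> coxeter_relators S m \<Longrightarrow> even (refl_count c r x)"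
proof -
  assume r: "r \<in> coxeter_relators S m"
  then obtain s t k where rdef: "r = alt_word s t (2 * k)"
    unfolding coxeter_relators_def by (auto simp: concat_replicate_alt_word)
  let ?P = "\<lambda>i. c @ refl_word r i @ rev c \<simeq> x"
  have periodic: "?P (i + k) = ?P i" if "i < k" for i
  proof -
    have "c @ r @ (refl_word r i @ rev c) \<simeq> c @ (refl_word r i @ rev c)"
      using trivial_cancel[OF relator_trivial[OF r]] .
    then show ?thesis using refl_word_relator_shift[OF rdef that] by (auto intro: ceq_trans ceq_sym)
  qed
  have eq: "{i. i < length r \<and> ?P i} = {i. i < k \<and> ?P i} \<union> (\<lambda>i. i + k) ` {i. i < k \<and> ?P i}"
  proof (rule set_eqI)
    fix i
    show "i \<in> {i. i < length r \<and> ?P i} \<longleftrightarrow> i \<in> {i. i < k \<and> ?P i} \<union> (\<lambda>i. i + k) ` {i. i < k \<and> ?P i}"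
    proof (cases "i < k")
      case True then show ?thesis using rdef by auto
    next
      case False
      then obtain j where j: "i = j + k" by (metis add.commute le_add_diff_inverse not_less)
      show ?thesis using False j rdef periodic by auto
    qed
  qed
  have "card {i. i < length r \<and> ?P i} = 2 * card {i. i < k \<and> ?P i}"
    unfolding eq by (subst card_Un_disjoint) (auto simp: card_image inj_on_def)
  then show ?thesis unfolding refl_count_def by simp
qed

lemma refl_count_trivial_conj:
  assumes r: "r \<in> coxeter_relators S m"
  shows "refl_count (c @ r) v x = refl_count c v x"
proof -
  have r0: "r \<simeq> []" and r0': "rev r \<simeq> []"
    using relator_trivial[OF r] relator_trivial[OF relator_rev[OF r]] .
  have "(c @ r) @ refl_word v i @ rev (c @ r) \<simeq> c @ refl_word v i @ rev c" for i
  proof -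
    have "(c @ r) @ refl_word v i @ rev (c @ r) = c @ r @ (refl_word v i @ rev r @ rev c)" by simp
    also have "\<dots> \<simeq> c @ (refl_word v i @ rev r @ rev c)" by (rule trivial_cancel[OF r0])
    also have "\<dots> = (c @ refl_word v i) @ rev r @ rev c" by simp
    also have "\<dots> \<simeq> (c @ refl_word v i) @ rev c" by (rule trivial_cancel[OF r0'])
    finally show ?thesis by simp
  qed
  then show ?thesis unfolding refl_count_def by (metis (lifting) ceq_sym ceq_trans)
qed

lemma refl_count_parity: "v \<simeq> w \<Longrightarrow> even (refl_count c v x) = even (refl_count c w x)"
proof (induction arbitrary: c rule: coxeter_eq.induct)
  case (rel r u v)
  have "refl_count c (u @ r @ v) x = refl_count c u x + refl_count (c @ u) r x + refl_count (c @ u @ r) v x"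
    by (simp add: refl_count_append)
  moreover have "refl_count c (u @ v) x = refl_count c u x + refl_count (c @ u) v x"
    by (simp add: refl_count_append)
  moreover have "refl_count (c @ u @ r) v x = refl_count (c @ u) v x"
    using refl_count_trivial_conj[OF rel, of "c @ u"] by simp
  ultimately show ?case using refl_count_relator_even[OF rel, of "c @ u" x] by simp
qed auto

text \<open>A word is \<^emph>\<open>reflection-distinct\<close> if its reflections are pairwise different in \<open>W\<close>.
  We show that these are exactly the reduced words.\<close>

definition refl_distinct :: "'a list \<Rightarrow> bool" where
  "refl_distinct w \<longleftrightarrow> (\<forall>i j. i < j \<and> j < length w \<longrightarrow> \<not> refl_word w i \<simeq> refl_word w j)"

lemma deletion:
  assumes w: "w = p @ a # q @ b # z" and wS: "w \<in> lists S"
    and h: "refl_word w (length p) \<simeq> refl_word w (length p + Suc (length q))"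
  shows "w \<simeq> p @ q @ z"
proof -
  have pS: "p \<in> lists S" and aS: "a \<in> S" and qS: "q \<in> lists S" using wS w by auto
  have rpS: "rev p \<in> lists S" and rqaS: "rev q @ [a] \<in> lists S" using pS qS aS by auto
  have e1: "refl_word w (length p) = p @ [a] @ rev p" using w by (simp add: refl_word_def)
  have e2: "refl_word w (length p + Suc (length q)) = (p @ [a]) @ (q @ [b] @ rev q @ [a]) @ rev p"
  proof -
    have "take (length p + Suc (length q)) w = p @ a # q" using w by simp
    moreover have "w ! (length p + Suc (length q)) = b" using w by (simp add: nth_append)
    ultimately show ?thesis by (simp add: refl_word_def)
  qed
  from h have "(p @ [a]) @ [] @ rev p \<simeq> (p @ [a]) @ (q @ [b] @ rev q @ [a]) @ rev p"
    using e1 e2 by simp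
  then have "[] @ rev p \<simeq> (q @ [b] @ rev q @ [a]) @ rev p" using cancel_left[of "p @ [a]"] pS aS by auto
  then have "[] \<simeq> q @ [b] @ rev q @ [a]" using cancel_right[of "rev p" "[]" "q @ [b] @ rev q @ [a]"] rpS by auto
  then have "(q @ [b]) @ (rev q @ [a]) \<simeq> []" by (simp add: ceq_sym)
  then have "q @ [b] \<simeq> [] @ rev (rev q @ [a])" using move_right[OF rqaS, of "q @ [b]" "[]"] by auto
  then have "[a] @ (q @ [b]) \<simeq> [a] @ ([a] @ q)" by (intro ceq_app_l) simp
  also have "[a] @ ([a] @ q) \<simeq> q" using gen_square_cancel[OF aS, of "[]" q] by simp
  finally have "a # q @ [b] \<simeq> q" by simp
  then have "p @ (a # q @ [b]) @ z \<simeq> p @ q @ z" by (rule ceq_cong)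
  then show ?thesis using w by simp
qed

lemma not_refl_distinct_shorter:
  assumes "w \<in> lists X" "X \<subseteq> S" "\<not> refl_distinct w"
  shows "\<exists>w'\<in>lists X. w \<simeq> w' \<and> length w' + 2 = length w"
proof -
  from assms(3) obtain i j where ij: "i < j" "j < length w" "refl_word w i \<simeq> refl_word w j"
    unfolding refl_distinct_def by auto
  from split_at_two_positions[OF ij(1,2)] obtain p a q b z where
    w: "w = p @ a # q @ b # z" "length p = i" "length q = j - Suc i" by blast
  have "length p + Suc (length q) = j" using w ij by simp
  then have "w \<simeq> p @ q @ z" using deletion[OF w(1)] assms ij w by auto
  moreover have "p @ q @ z \<in> lists X" using assms(1) w by auto
  ultimately show ?thesis using w by (intro bexI[of _ "p @ q @ z"]) auto
qed

lemma refl_distinct_exists: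
  "w \<in> lists X \<Longrightarrow> X \<subseteq> S \<Longrightarrow> \<exists>v\<in>lists X. w \<simeq> v \<and> refl_distinct v \<and> length v \<le> length w"
proof (induction "length w" arbitrary: w rule: less_induct)
  case less
  show ?case
  proof (cases "refl_distinct w")
    case True then show ?thesis using less by auto
  next
    case False
    from not_refl_distinct_shorter[OF less.prems False] obtain w' where
      w': "w' \<in> lists X" "w \<simeq> w'" "length w' + 2 = length w" by blast
    from less.hyps[of w'] w' less.prems obtain v where
      "v \<in> lists X" "w' \<simeq> v" "refl_distinct v" "length v \<le> length w'" by auto
    then show ?thesis using w' by (auto intro: ceq_trans)
  qed
qed

text \<open>Each reflection of a reflection-distinct word \<open>w\<close> occurs exactly once in \<open>w\<close>, hence an odd
  number of times in any word representing the same element; in particular it occurs there.\<close>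

lemma refl_distinct_refl_occurs:
  assumes "refl_distinct w" "w \<simeq> v" "i < length w"
  shows "\<exists>j<length v. refl_word v j \<simeq> refl_word w i"
proof -
  have "{j. j < length w \<and> [] @ refl_word w j @ rev [] \<simeq> refl_word w i} = {i}"
  proof (rule set_eqI, rule iffI)
    fix j assume "j \<in> {j. j < length w \<and> [] @ refl_word w j @ rev [] \<simeq> refl_word w i}"
    then have j: "j < length w" "refl_word w j \<simeq> refl_word w i" by auto
    then show "j \<in> {i}"
      using assms(1,3) unfolding refl_distinct_def by (metis ceq_sym linorder_neqE_nat singletonI)
  qed (use assms(3) in auto)
  then have "refl_count [] w (refl_word w i) = 1" unfolding refl_count_def by simp
  then have "odd (refl_count [] v (refl_word w i))"
    using refl_count_parity[OF assms(2), of "[]" "refl_word w i"] by simp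
  then have "{j. j < length v \<and> [] @ refl_word v j @ rev [] \<simeq> refl_word w i} \<noteq> {}"
    unfolding refl_count_def by (metis card.empty even_zero)
  then show ?thesis by auto
qed

text \<open>Reflection-distinct words are reduced: distinct reflections of \<open>w\<close> must be matched
  injectively by positions of \<open>v\<close>.\<close>

lemma refl_distinct_minimal:
  assumes "refl_distinct w" "w \<simeq> v"
  shows "length w \<le> length v"
proof -
  define f where "f i = (SOME j. j < length v \<and> refl_word v j \<simeq> refl_word w i)" for i
  have f: "f i < length v \<and> refl_word v (f i) \<simeq> refl_word w i" if "i < length w" for i
    unfolding f_def using someI_ex[OF refl_distinct_refl_occurs[OF assms that]] by simp
  have "inj_on f {..<length w}"
  proof (rule inj_onI)
    fix i i' assume ii: "i \<in> {..<length w}" "i' \<in> {..<length w}" "f i = f i'"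
    then have "refl_word w i \<simeq> refl_word w i'" using f[of i] f[of i'] by (auto intro: ceq_trans ceq_sym)
    then show "i = i'" using assms(1) ii unfolding refl_distinct_def
      by (metis lessThan_iff linorder_neqE_nat ceq_sym)
  qed
  moreover have "f ` {..<length w} \<subseteq> {..<length v}" using f by auto
  ultimately have "card {..<length w} \<le> card {..<length v}"
    by (metis card_inj_on_le finite_lessThan)
  then show ?thesis by simp
qed

definition len :: "'a list \<Rightarrow> nat" where
  "len w = (LEAST n. \<exists>v\<in>lists S. v \<simeq> w \<and> length v = n)"

lemma len_refl_distinct: "v \<in> lists S \<Longrightarrow> refl_distinct v \<Longrightarrow> v \<simeq> w \<Longrightarrow> len w = length v"
  unfolding len_def
proof (rule Least_equality)
  assume "v \<in> lists S" "refl_distinct v" "v \<simeq> w"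
  then show "\<exists>u\<in>lists S. u \<simeq> w \<and> length u = length v" by auto
  fix n assume "\<exists>u\<in>lists S. u \<simeq> w \<and> length u = n"
  then obtain u where "u \<simeq> w" "length u = n" by auto
  then show "length v \<le> n" using refl_distinct_minimal[OF \<open>refl_distinct v\<close>, of u] \<open>v \<simeq> w\<close>
    by (auto intro: ceq_trans ceq_sym)
qed

lemma reduced_exists: "w \<in> lists X \<Longrightarrow> X \<subseteq> S \<Longrightarrow> \<exists>v\<in>lists X. v \<simeq> w \<and> refl_distinct v \<and> length v = len w"
proof -
  assume a: "w \<in> lists X" "X \<subseteq> S"
  from refl_distinct_exists[OF a] obtain v where v: "v \<in> lists X" "w \<simeq> v" "refl_distinct v" by auto
  have "v \<in> lists S" using v a by auto
  moreover have "len w = length v" using len_refl_distinct[of v w] v \<open>v \<in> lists S\<close> by (auto intro: ceq_sym)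
  ultimately show ?thesis using v by (intro bexI[of _ v]) (auto intro: ceq_sym)
qed

lemma len_cong: "v \<simeq> w \<Longrightarrow> len v = len w"
  unfolding len_def by (metis ceq_trans ceq_sym)

lemma len_le: "w \<in> lists S \<Longrightarrow> len w \<le> length w"
  using reduced_exists[of w S] refl_distinct_exists[of w S] by (metis order.refl ceq_sym len_refl_distinct)

lemma len_Nil[simp]: "len [] = 0"
  using len_le[of "[]"] by simp

lemma refl_distinct_if_reduced: "w \<in> lists S \<Longrightarrow> len w = length w \<Longrightarrow> refl_distinct w"
proof (rule ccontr)
  assume a: "w \<in> lists S" "len w = length w" "\<not> refl_distinct w"
  from not_refl_distinct_shorter[OF a(1) order.refl a(3)] obtain w' where
    "w' \<in> lists S" "w \<simeq> w'" "length w' + 2 = length w" by blast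
  then have "len w \<le> length w'" using len_le[of w'] len_cong[of w w'] by simp
  then show False using a \<open>length w' + 2 = length w\<close> by simp
qed

lemma len_app: "a \<in> lists S \<Longrightarrow> b \<in> lists S \<Longrightarrow> len (a @ b) \<le> len a + len b"
proof -
  assume ab: "a \<in> lists S" "b \<in> lists S"
  from reduced_exists[OF ab(1) order.refl] obtain a' where a': "a' \<in> lists S" "a' \<simeq> a" "length a' = len a" by auto
  from reduced_exists[OF ab(2) order.refl] obtain b' where b': "b' \<in> lists S" "b' \<simeq> b" "length b' = len b" by auto
  have "a' @ b' \<simeq> a @ b" using a' b' by (intro ceq_app)
  then have "len (a @ b) = len (a' @ b')" by (simp add: len_cong ceq_sym)
  also have "\<dots> \<le> length (a' @ b')" using a' b' by (intro len_le) auto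
  finally show ?thesis using a' b' by simp
qed

lemma len_rev_le: "w \<in> lists S \<Longrightarrow> len (rev w) \<le> len w"
proof -
  assume w: "w \<in> lists S"
  from reduced_exists[OF w order.refl] obtain a where a: "a \<in> lists S" "a \<simeq> w" "length a = len w" by auto
  have "rev a \<simeq> rev w" using ceq_rev[OF a(2)] .
  then have "len (rev w) = len (rev a)" by (simp add: len_cong ceq_sym)
  also have "\<dots> \<le> length (rev a)" using a by (intro len_le) auto
  finally show ?thesis using a by simp
qed

lemma len_rev: "w \<in> lists S \<Longrightarrow> len (rev w) = len w"
proof -
  assume w: "w \<in> lists S"
  then have "rev w \<in> lists S" by auto
  from len_rev_le[OF w] len_rev_le[OF this] show ?thesis by simp
qed

lemma len0: "w \<in> lists S \<Longrightarrow> len w = 0 \<Longrightarrow> w \<simeq> []"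
  using reduced_exists[of w S] by (auto intro: ceq_sym)

lemma refl_distinct_prefix: "refl_distinct (a @ b) \<Longrightarrow> refl_distinct a"
  unfolding refl_distinct_def
proof (intro allI impI)
  fix i j assume h: "\<forall>i j. i < j \<and> j < length (a @ b) \<longrightarrow> \<not> refl_word (a @ b) i \<simeq> refl_word (a @ b) j"
    and ij: "i < j \<and> j < length a"
  then have "\<not> refl_word (a @ b) i \<simeq> refl_word (a @ b) j" by auto
  then show "\<not> refl_word a i \<simeq> refl_word a j" using ij by (simp add: refl_word_append_left)
qed

lemma len_snoc_cases:
  assumes w: "w \<in> lists S" and s: "s \<in> S"
  shows "len (w @ [s]) = Suc (len w) \<or> Suc (len (w @ [s])) = len w"
proof -
  from reduced_exists[OF w order.refl] obtain a where a: "a \<in> lists S" "a \<simeq> w" "refl_distinct a" "length a = len w" by auto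
  have eq: "len (w @ [s]) = len (a @ [s])" using len_cong[OF ceq_app_r[OF a(2)]] by simp
  have as: "a @ [s] \<in> lists S" using a s by auto
  have ws: "w @ [s] \<in> lists S" using w s by auto
  have up: "len w \<le> Suc (len (w @ [s]))"
  proof -
    have "w \<simeq> (w @ [s]) @ [s]" using gen_square_cancel[OF s, of w "[]"] by (simp add: ceq_sym)
    then have "len w = len ((w @ [s]) @ [s])" by (rule len_cong)
    also have "\<dots> \<le> len (w @ [s]) + len [s]" using ws s by (intro len_app) auto
    also have "len [s] \<le> 1" using len_le[of "[s]"] s by simp
    finally show ?thesis by simp
  qed
  show ?thesis
  proof (cases "refl_distinct (a @ [s])")
    case True
    then have "len (a @ [s]) = length (a @ [s])" using len_refl_distinct[OF as True] by simp
    then show ?thesis using eq a by simp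
  next
    case False
    from not_refl_distinct_shorter[OF as order.refl False] obtain w' where
      w': "w' \<in> lists S" "a @ [s] \<simeq> w'" "length w' + 2 = length (a @ [s])" by blast
    have "len (a @ [s]) = len w'" using w' by (intro len_cong)
    also have "\<dots> \<le> length w'" using w' len_le by auto
    finally have "len (a @ [s]) + 1 \<le> len w" using w' a by simp
    then show ?thesis using eq up by simp
  qed
qed

lemma exchange:
  assumes a: "a \<in> lists S" "refl_distinct a" and s: "s \<in> S" and nd: "\<not> refl_distinct (a @ [s])"
  shows "\<exists>i<length a. a @ [s] \<simeq> take i a @ drop (Suc i) a"
proof -
  from nd obtain i j where ij: "i < j" "j < length (a @ [s])" "refl_word (a @ [s]) i \<simeq> refl_word (a @ [s]) j"
    unfolding refl_distinct_def by auto
  have j: "j = length a"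
  proof (rule ccontr)
    assume "j \<noteq> length a"
    then have "j < length a" using ij by simp
    then show False using ij a(2) unfolding refl_distinct_def by (auto simp: refl_word_append_left)
  qed
  from split_at_two_positions[OF ij(1,2)] obtain p x q b z where
    w: "a @ [s] = p @ x # q @ b # z" "length p = i" "length q = j - Suc i" by blast
  have "length (a @ [s]) = length (p @ x # q @ b # z)" using w(1) by (rule arg_cong)
  then have "length z = 0" using w(2,3) j ij by (cases z) auto
  then have z: "z = []" by simp
  then have aeq: "a = p @ x # q" and "b = s" using w(1) by auto
  have "length p + Suc (length q) = j" using w j ij by simp
  then have "refl_word (a @ [s]) (length p) \<simeq> refl_word (a @ [s]) (length p + Suc (length q))"
    using ij(3) w(2) by simp
  then have "a @ [s] \<simeq> p @ q @ z" using deletion[OF w(1)] a s by auto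
  moreover have "take i a = p" "drop (Suc i) a = q" using aeq w by auto
  ultimately show ?thesis using z ij j by (intro exI[of _ i]) auto
qed

definition min_rep :: "'a set \<Rightarrow> 'a list \<Rightarrow> bool" where
  "min_rep Y u \<longleftrightarrow> u \<in> lists S \<and> (\<forall>v\<in>lists Y. len u \<le> len (u @ v))"

lemma min_rep_cong: "min_rep Y u \<Longrightarrow> u \<simeq> u' \<Longrightarrow> u' \<in> lists S \<Longrightarrow> min_rep Y u'"
  unfolding min_rep_def using len_cong[of u u'] len_cong[OF ceq_app_r[of u u']] by auto

text \<open>Otherwise the exchange condition deletes a letter either from \<open>v s\<close> (contradicting that it
  is reduced) or from \<open>a\<close> (producing a shorter element of \<open>u W\<^sub>Y\<close>).\<close>

lemma min_rep_reduced_snoc: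
  assumes Y: "Y \<subseteq> S" and u: "min_rep Y u"
    and a: "a \<in> lists S" "a \<simeq> u" "length a = len u"
    and vs: "v @ [s] \<in> lists Y" "refl_distinct (v @ [s])" and av: "refl_distinct (a @ v)"
  shows "refl_distinct ((a @ v) @ [s])"
proof (rule ccontr)
  assume nd: "\<not> refl_distinct ((a @ v) @ [s])"
  have vY: "v \<in> lists Y" and sY: "s \<in> Y" using vs by auto
  then have vS: "v \<in> lists S" and sS: "s \<in> S" using Y by auto
  have avS: "a @ v \<in> lists S" using a vS by auto
  from exchange[OF avS av sS nd] obtain i where
    i: "i < length (a @ v)" "(a @ v) @ [s] \<simeq> take i (a @ v) @ drop (Suc i) (a @ v)" by blast
  show False
  proof (cases "i < length a")
    case False
    define k where "k = i - length a"
    have ik: "i = length a + k" using False k_def by simp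
    have "a @ (v @ [s]) \<simeq> a @ (take k v @ drop (Suc k) v)" using i(2) ik by simp
    then have "v @ [s] \<simeq> take k v @ drop (Suc k) v" by (rule cancel_left[OF a(1)])
    then have "len (v @ [s]) = len (take k v @ drop (Suc k) v)" by (rule len_cong)
    also have "\<dots> \<le> length (take k v @ drop (Suc k) v)"
      using vS by (intro len_le) (auto dest: in_set_takeD in_set_dropD)
    also have "\<dots> < length (v @ [s])" using i ik by simp
    finally show False using len_refl_distinct[of "v @ [s]" "v @ [s]"] vs vS sS by auto
  next
    case True
    define a' where "a' = take i a @ drop (Suc i) a"
    have a'S: "a' \<in> lists S" using a(1) by (auto simp: a'_def dest: in_set_takeD in_set_dropD)
    have "a @ (v @ [s]) \<simeq> a' @ v" using i(2) True by (simp add: a'_def)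
    then have "a \<simeq> (a' @ v) @ rev (v @ [s])" using vs Y by (intro move_right) auto
    then have ua: "u \<simeq> a' @ (v @ [s] @ rev v)" using a(2) by (auto intro: ceq_trans ceq_sym)
    define y where "y = v @ [s] @ rev v"
    have yY: "y \<in> lists Y" using vY sY by (auto simp: y_def)
    have yS: "y \<in> lists S" using yY Y by auto
    have "u @ y \<simeq> (a' @ y) @ y" using ua by (intro ceq_app_r) (simp add: y_def)
    also have "(a' @ y) @ y = a' @ (y @ rev y) @ []" by (simp add: y_def)
    also have "\<dots> \<simeq> a' @ [] @ []" using word_rev_inverse[OF yS] by (rule ceq_cong)
    finally have "len (u @ y) = len a'" using len_cong by simp
    also have "\<dots> \<le> length a'" using len_le[OF a'S] .
    also have "\<dots> < len u" using True a by (simp add: a'_def)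
    finally have "len (u @ y) < len u" .
    moreover have "len u \<le> len (u @ y)" using u yY unfolding min_rep_def by blast
    ultimately show False by simp
  qed
qed

lemma min_rep_len_add_distinct:
  assumes Y: "Y \<subseteq> S" and u: "min_rep Y u"
  shows "v \<in> lists Y \<Longrightarrow> refl_distinct v \<Longrightarrow> len (u @ v) = len u + length v"
proof (induction v rule: rev_induct)
  case Nil then show ?case by simp
next
  case (snoc s v)
  have uS: "u \<in> lists S" using u unfolding min_rep_def by auto
  have vY: "v \<in> lists Y" and vS: "v \<in> lists S" and sS: "s \<in> S" using snoc.prems Y by auto
  have IH: "len (u @ v) = len u + length v"
    using snoc.IH vY refl_distinct_prefix snoc.prems by blast
  from reduced_exists[OF uS order.refl] obtain a where
    a: "a \<in> lists S" "a \<simeq> u" "length a = len u" by auto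
  have av: "a @ v \<simeq> u @ v" using a by (intro ceq_app_r)
  have avS: "a @ v \<in> lists S" using a vS by auto
  have "len (a @ v) = length (a @ v)" using IH a len_cong[OF av] by simp
  then have "refl_distinct (a @ v)" using refl_distinct_if_reduced[OF avS] by simp
  then have "refl_distinct ((a @ v) @ [s])" using min_rep_reduced_snoc[OF Y u a] snoc.prems by blast
  then have "len ((a @ v) @ [s]) = length ((a @ v) @ [s])"
    using len_refl_distinct[of "(a @ v) @ [s]"] avS sS by auto
  moreover have "len (u @ v @ [s]) = len ((a @ v) @ [s])"
    using av by (metis append.assoc ceq_app_r len_cong ceq_sym)
  ultimately show ?case using a by simp
qed

lemma min_rep_len_add:
  assumes Y: "Y \<subseteq> S" and u: "min_rep Y u" and v: "v \<in> lists Y"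
  shows "len (u @ v) = len u + len v"
proof -
  from reduced_exists[OF v Y] obtain v0 where v0: "v0 \<in> lists Y" "v0 \<simeq> v" "refl_distinct v0" "length v0 = len v" by auto
  have "len (u @ v) = len (u @ v0)" using len_cong[OF ceq_app_l[OF v0(2)]] by simp
  also have "\<dots> = len u + length v0" using min_rep_len_add_distinct[OF Y u v0(1,3)] .
  finally show ?thesis using v0 by simp
qed

lemma min_rep_exists:
  assumes YZ: "Y \<subseteq> Z" and ZS: "Z \<subseteq> S" and c: "c \<in> lists Z"
  shows "\<exists>u\<in>lists Z. \<exists>v\<in>lists Y. min_rep Y u \<and> c \<simeq> u @ v"
proof -
  define n0 where "n0 = (LEAST n. \<exists>v\<in>lists Y. len (c @ v) = n)"
  have "\<exists>v\<in>lists Y. len (c @ v) = n0" unfolding n0_def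
    by (rule LeastI_ex) (auto intro: bexI[of _ "[]"])
  then obtain v0 where v0: "v0 \<in> lists Y" "len (c @ v0) = n0" by auto
  have uZ: "c @ v0 \<in> lists Z" using c v0 YZ by auto
  have "min_rep Y (c @ v0)" unfolding min_rep_def
  proof (intro conjI ballI)
    show "c @ v0 \<in> lists S" using uZ ZS by auto
    fix v assume "v \<in> lists Y"
    then have vv: "v0 @ v \<in> lists Y" using v0 by auto
    have "n0 \<le> len (c @ (v0 @ v))" unfolding n0_def by (rule Least_le, rule bexI[OF _ vv]) simp
    then show "len (c @ v0) \<le> len ((c @ v0) @ v)" using v0 by simp
  qed
  moreover have "c \<simeq> (c @ v0) @ rev v0"
    using ceq_app_l[OF word_rev_inverse[of v0], of c] v0 YZ ZS by (auto intro: ceq_sym)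
  moreover have "rev v0 \<in> lists Y" using v0 by auto
  ultimately show ?thesis using uZ by blast
qed

lemma min_rep_unique:
  assumes Y: "Y \<subseteq> S" and u: "min_rep Y u" and u': "min_rep Y u'"
    and v: "v \<in> lists Y" and v': "v' \<in> lists Y" and h: "u @ v \<simeq> u' @ v'"
  shows "u \<simeq> u' \<and> v \<simeq> v'"
proof -
  have vS: "v \<in> lists S" and v'S: "v' \<in> lists S" using v v' Y by auto
  have e1: "u' \<simeq> u @ (v @ rev v')"
    using move_right[OF v'S, of u' "u @ v"] h by (simp add: ceq_sym)
  have e2: "u \<simeq> u' @ (v' @ rev v)"
    using move_right[OF vS, of u "u' @ v'"] h by simp
  have vv1: "v @ rev v' \<in> lists Y" and vv2: "v' @ rev v \<in> lists Y" using v v' by auto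
  have l1: "len u' = len u + len (v @ rev v')"
    using len_cong[OF e1] min_rep_len_add[OF Y u vv1] by simp
  have l2: "len u = len u' + len (v' @ rev v)"
    using len_cong[OF e2] min_rep_len_add[OF Y u' vv2] by simp
  have "len (v @ rev v') = 0" using l1 l2 by simp
  then have "v @ rev v' \<simeq> []" using vS v'S by (intro len0) auto
  then have vv: "v \<simeq> [] @ rev (rev v')" using v'S by (intro move_right) auto
  have "u' \<simeq> u @ []" using e1 ceq_app_l[OF \<open>v @ rev v' \<simeq> []\<close>, of u] by (auto intro: ceq_trans)
  then show ?thesis using vv by (auto intro: ceq_sym)
qed

lemma min_rep_if_ascents:
  assumes Y: "Y \<subseteq> S" and u: "u \<in> lists S" and asc: "\<forall>s\<in>Y. len u < len (u @ [s])"
  shows "min_rep Y u"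
proof -
  from min_rep_exists[OF Y order.refl u] obtain u0 v0 where
    uv: "u0 \<in> lists S" "v0 \<in> lists Y" "min_rep Y u0" "u \<simeq> u0 @ v0" by blast
  have lu: "len u = len u0 + len v0" using len_cong[OF uv(4)] min_rep_len_add[OF Y uv(3,2)] by simp
  show ?thesis
  proof (cases "len v0 = 0")
    case True
    then have "v0 \<simeq> []" using uv Y by (intro len0) auto
    then have "u0 @ v0 \<simeq> u0 @ []" by (rule ceq_app_l)
    then have "u0 \<simeq> u" using uv by (auto intro: ceq_trans ceq_sym)
    then show ?thesis using min_rep_cong[OF uv(3)] u by auto
  next
    case False
    from reduced_exists[OF uv(2) Y] obtain b where b: "b \<in> lists Y" "b \<simeq> v0" "length b = len v0" by auto
    then have "b \<noteq> []" using False by auto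
    then obtain b' s where bs: "b = b' @ [s]" by (metis rev_exhaust)
    have sY: "s \<in> Y" and b'Y: "b' \<in> lists Y" using b bs by auto
    have sS: "s \<in> S" using sY Y by auto
    have "u @ [s] \<simeq> (u0 @ v0) @ [s]" using uv by (intro ceq_app_r)
    also have "\<dots> \<simeq> (u0 @ b) @ [s]" using b(2) by (intro ceq_app_r ceq_app_l) (rule ceq_sym)
    also have "\<dots> = (u0 @ b') @ [s, s] @ []" using bs by simp
    also have "\<dots> \<simeq> (u0 @ b') @ [] @ []" using gen_square[OF sS] by (rule ceq_cong)
    finally have "len (u @ [s]) = len (u0 @ b')" using len_cong by simp
    also have "\<dots> = len u0 + len b'" using min_rep_len_add[OF Y uv(3) b'Y] .
    also have "len b' \<le> length b'" using b'Y Y by (intro len_le) auto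
    finally show ?thesis using asc sY lu b bs by auto
  qed
qed

lemma min_rep_ascent: "Y \<subseteq> S \<Longrightarrow> min_rep Y u \<Longrightarrow> s \<in> Y \<Longrightarrow> len u < len (u @ [s])"
proof -
  assume a: "Y \<subseteq> S" "min_rep Y u" "s \<in> Y"
  then have "len u \<le> len (u @ [s])" unfolding min_rep_def by auto
  moreover have "u \<in> lists S" "s \<in> S" using a unfolding min_rep_def by auto
  ultimately show ?thesis using len_snoc_cases[of u s] by auto
qed

lemma len_cons_cases:
  assumes w: "w \<in> lists S" and s: "s \<in> S"
  shows "len (s # w) = Suc (len w) \<or> Suc (len (s # w)) = len w"
proof -
  have r: "rev w \<in> lists S" using w by auto
  have "len (s # w) = len (rev (rev w @ [s]))" by simp
  also have "\<dots> = len (rev w @ [s])" using r s by (intro len_rev) auto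
  finally show ?thesis using len_snoc_cases[OF r s] len_rev[OF w] by simp
qed

text \<open>Reduced words in a dihedral subgroup \<open>W\<^bsub>{x, y}\<^esub>\<close> are alternating, since a reduced word
  never repeats a letter.\<close>

lemma reduced_no_square:
  assumes w: "w \<in> lists S" "len w = length w" and i: "Suc i < length w"
  shows "w ! i \<noteq> w ! Suc i"
proof
  assume eq: "w ! i = w ! Suc i"
  have "i < length w" using i by simp
  from id_take_nth_drop[OF this] have "w = take i w @ w ! i # drop (Suc i) w" .
  moreover have "drop (Suc i) w = w ! Suc i # drop (Suc (Suc i)) w"
    using i by (simp add: Cons_nth_drop_Suc)
  ultimately have we: "w = take i w @ w ! i # w ! i # drop (Suc (Suc i)) w" using eq by simp
  have "w ! i \<in> S" using w i by auto
  from gen_square_cancel[OF this, of "take i w" "drop (Suc (Suc i)) w"] we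
  have "w \<simeq> take i w @ drop (Suc (Suc i)) w" by simp
  then have "len w = len (take i w @ drop (Suc (Suc i)) w)" by (rule len_cong)
  also have "\<dots> \<le> length (take i w @ drop (Suc (Suc i)) w)"
    using w by (intro len_le) (auto dest: in_set_takeD in_set_dropD)
  finally show False using w i by simp
qed

lemma reduced_dihedral_alternating:
  assumes "x \<noteq> y" "{x, y} \<subseteq> S" "w \<in> lists {x, y}" "len w = length w" "w \<noteq> []" "hd w = x"
  shows "w = alt_word x y (length w)"
proof (rule alt_word_char)
  show "\<forall>i. Suc i < length w \<longrightarrow> w ! i \<noteq> w ! Suc i"
    using reduced_no_square[of w] assms by blast
qed (use assms in auto)

text \<open>If the braid relation of length \<open>k\<close> holds in \<open>W\<^bsub>{t, u}\<^esub>\<close>, then no element of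
  \<open>W\<^bsub>{t, u}\<^esub>\<close> is longer than \<open>k\<close>: a reduced word of length \<open>k + 1\<close> would be alternating
  and could be shortened with the braid relation.\<close>

lemma dihedral_len_bound:
  assumes tu: "t \<noteq> u" "{t, u} \<subseteq> S" and k: "1 \<le> k"
    and braid: "alt_word t u k \<simeq> alt_word u t k" and v: "v \<in> lists {t, u}"
  shows "len v \<le> k"
proof (rule ccontr)
  assume long: "\<not> len v \<le> k"
  from reduced_exists[OF v tu(2)] obtain b where
    b: "b \<in> lists {t, u}" "b \<simeq> v" "refl_distinct b" "length b = len v" by auto
  have bS: "b \<in> lists S" using b tu by auto
  have lb: "len b = length b" using len_refl_distinct[OF bS b(3)] by simp
  have "b \<noteq> []" using b long by auto
  then obtain x y where xy: "{x, y} = {t, u}" "x \<noteq> y" "hd b = x" using b(1) tu(1) by (cases b) auto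
  have xyS: "x \<in> S" "y \<in> S" using xy(1) tu(2) by blast+
  have braid': "alt_word x y k \<simeq> alt_word y x k"
    using xy braid by (auto simp: doubleton_eq_iff intro: ceq_sym)
  have "b = alt_word x y (length b)"
    using reduced_dihedral_alternating[OF xy(2) _ _ lb \<open>b \<noteq> []\<close> xy(3)] xy(1) tu b(1) by auto
  define p where "p = take (Suc k) b"
  have "refl_distinct p" using b(3) refl_distinct_prefix[of p] by (metis append_take_drop_id p_def)
  have pS: "p \<in> lists S" using bS by (auto simp: p_def dest: in_set_takeD)
  have lp: "len p = Suc k" using len_refl_distinct[OF pS \<open>refl_distinct p\<close>] long b by (simp add: p_def)
  have "p = alt_word x y (Suc k)"
    using \<open>b = _\<close> long b by (metis take_alt_word min_def not_less_eq_eq p_def)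
  obtain k' where k': "k = Suc k'" using k by (cases k) auto
  have "p = x # alt_word y x k" using \<open>p = alt_word x y (Suc k)\<close> by simp
  also have "\<dots> \<simeq> x # alt_word x y k" using ceq_app_l[OF braid'[THEN ceq_sym], of "[x]"] by simp
  also have "\<dots> = [] @ x # x # alt_word y x k'" using k' by simp
  also have "\<dots> \<simeq> [] @ alt_word y x k'" using gen_square_cancel xyS by blast
  finally have "len p = len (alt_word y x k')" using len_cong by simp
  also have "\<dots> \<le> k'" using len_le[of "alt_word y x k'"] set_alt_word[of y x k'] xyS by auto
  finally show False using lp k' by simp
qed

lemma dihedral_longest:
  assumes tu: "t \<noteq> u" "t \<in> S" "u \<in> S" and k: "1 \<le> k"
    and g: "g \<simeq> rev (alt_word t u k)" "g \<simeq> rev (alt_word u t k)" "len g = k" and gS: "g \<in> lists S"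
    and v: "v \<in> lists {t, u}"
  shows "len (g @ v) + len v = k"
proof -
  have YS: "{t, u} \<subseteq> S" using tu by auto
  have vS: "v \<in> lists S" using v YS by auto
  have braid: "alt_word t u k \<simeq> alt_word u t k"
    using ceq_rev[OF ceq_trans[OF ceq_sym[OF g(1)] g(2)]] by simp
  have lower: "k \<le> len (g @ v) + len v"
  proof -
    have "g \<simeq> (g @ v) @ rev v" using ceq_app_l[OF word_rev_inverse[OF vS], of g] by (simp add: ceq_sym)
    then have "len g = len ((g @ v) @ rev v)" by (rule len_cong)
    also have "\<dots> \<le> len (g @ v) + len (rev v)" using gS vS by (intro len_app) auto
    finally show ?thesis using len_rev[OF vS] g by simp
  qed
  from reduced_exists[OF v YS] obtain b where
    b: "b \<in> lists {t, u}" "b \<simeq> v" "refl_distinct b" "length b = len v" by auto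
  have bS: "b \<in> lists S" using b YS by auto
  have lb: "len b = length b" using len_refl_distinct[OF bS b(3)] by simp
  have upper: "len (g @ v) + len v \<le> k"
  proof (cases "b = []")
    case True
    then have "v \<simeq> []" using b by (auto intro: ceq_sym)
    then have "len (g @ v) = len (g @ [])" by (intro len_cong ceq_app_l)
    then show ?thesis using True b g by simp
  next
    case False
    then obtain x y where xy: "{x, y} = {t, u}" "x \<noteq> y" "hd b = x" using b(1) tu(1) by (cases b) auto
    have gx: "g \<simeq> rev (alt_word x y k)" using g xy by (auto simp: doubleton_eq_iff)
    have bb: "b = alt_word x y (length b)"
      using reduced_dihedral_alternating[OF xy(2) _ _ lb False xy(3)] xy(1) YS b(1) by auto
    have jk: "length b \<le> k" using dihedral_len_bound[OF tu(1) YS k braid v] b by simp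
    define p where "p = (if even (length b) then x else y)"
    define q where "q = (if even (length b) then y else x)"
    have "alt_word x y k = alt_word x y (length b + (k - length b))" using jk by simp
    also have "\<dots> = b @ alt_word p q (k - length b)" using alt_word_add bb unfolding p_def q_def by metis
    finally have rev_alt: "rev (alt_word x y k) = rev (alt_word p q (k - length b)) @ rev b" by simp
    have "g @ v \<simeq> rev (alt_word x y k) @ b" using gx b(2) by (intro ceq_app) (auto intro: ceq_sym)
    also have "\<dots> = rev (alt_word p q (k - length b)) @ (rev b @ b) @ []" using rev_alt by simp
    also have "\<dots> \<simeq> rev (alt_word p q (k - length b)) @ [] @ []"
      using rev_word_inverse[OF bS] by (rule ceq_cong)
    finally have "len (g @ v) = len (rev (alt_word p q (k - length b)))" using len_cong by simp
    also have "\<dots> \<le> k - length b"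
    proof -
      have "p \<in> S" "q \<in> S" using xy YS unfolding p_def q_def by auto
      then have "rev (alt_word p q (k - length b)) \<in> lists S"
        using set_alt_word[of p q "k - length b"] by auto
      from len_le[OF this] show ?thesis by simp
    qed
    finally show ?thesis using b jk by simp
  qed
  show ?thesis using lower upper by simp
qed

text \<open>An element with both \<open>r\<close> and \<open>s\<close> as right descents has both alternating reduced words
  ending in \<open>r\<close> and in \<open>s\<close>, hence is the longest element of \<open>W\<^bsub>{r, s}\<^esub>\<close>.\<close>

lemma descent_alt_form:
  assumes xy: "x \<noteq> y" "x \<in> S" "y \<in> S" and g: "g \<in> lists {x, y}" and d: "len (g @ [x]) < len g"
  shows "g \<simeq> rev (alt_word x y (len g))"
proof -
  have YS: "{x, y} \<subseteq> S" using xy by auto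
  have gS: "g \<in> lists S" using g YS by auto
  have gx: "g @ [x] \<in> lists {x, y}" using g by auto
  have l1: "Suc (len (g @ [x])) = len g" using len_snoc_cases[OF gS xy(2)] d by auto
  from reduced_exists[OF gx YS] obtain b where
    b: "b \<in> lists {x, y}" "b \<simeq> g @ [x]" "length b = len (g @ [x])" by auto
  define c where "c = b @ [x]"
  have "c \<simeq> (g @ [x]) @ [x]" unfolding c_def using b(2) by (rule ceq_app_r)
  also have "(g @ [x]) @ [x] = g @ [x, x] @ []" by simp
  also have "\<dots> \<simeq> g @ [] @ []" using gen_square[OF xy(2)] by (rule ceq_cong)
  finally have cg: "c \<simeq> g" by simp
  have cS: "c \<in> lists {x, y}" using b by (auto simp: c_def)
  have len_c: "length c = len g" using b l1 by (simp add: c_def)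
  have "c \<in> lists S" using cS YS by auto
  then have "len (rev c) = length (rev c)"
    using len_rev[of c] len_cong[OF cg] len_c by auto
  moreover have "rev c \<in> lists {x, y}" "rev c \<noteq> []" "hd (rev c) = x" using cS by (auto simp: c_def)
  ultimately have "rev c = alt_word x y (length (rev c))"
    using reduced_dihedral_alternating[OF xy(1) YS] by blast
  then have "c = rev (alt_word x y (len g))" using len_c by (metis length_rev rev_rev_ident)
  then show ?thesis using cg by (auto intro: ceq_sym)
qed

lemma dihedral_right:
  assumes rs: "r \<noteq> s" "r \<in> S" "s \<in> S" and g: "g \<in> lists {r, s}"
    and desc_r: "len (g @ [r]) < len g" and desc_s: "len (g @ [s]) < len g"
    and v: "v \<in> lists {r, s}"
  shows "len (g @ v) + len v = len g"
proof (rule dihedral_longest[OF rs _ _ _ _ _ v])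
  show "1 \<le> len g" using desc_r by simp
  show "g \<simeq> rev (alt_word r s (len g))" using descent_alt_form[OF rs g desc_r] .
  have g': "g \<in> lists {s, r}" using g by auto
  show "g \<simeq> rev (alt_word s r (len g))" using descent_alt_form[OF rs(1)[symmetric] rs(3,2) g' desc_s] .
  show "g \<in> lists S" using g rs by auto
qed simp

text \<open>The same for left descents, reduced to the previous lemma via the factorisation
  \<open>e\<^sup>-\<^sup>1 = u g\<close> with \<open>u\<close> minimal in \<open>u W\<^bsub>{r, s}\<^esub>\<close>.\<close>

lemma dihedral_left:
  assumes rs: "r \<noteq> s" "r \<in> S" "s \<in> S" and e: "e \<in> lists S"
    and desc_r: "len (r # e) < len e" and desc_s: "len (s # e) < len e" and v: "v \<in> lists {r, s}"
  shows "len (rev v @ e) + len v = len e"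
proof -
  have YS: "{r, s} \<subseteq> S" using rs by auto
  define f where "f = rev e"
  have fS: "f \<in> lists S" using e by (auto simp: f_def)
  have lf: "len f = len e" using len_rev[OF e] by (simp add: f_def)
  have lfx: "len (f @ [x]) = len (x # e)" if "x \<in> S" for x
  proof -
    have "f @ [x] = rev (x # e)" by (simp add: f_def)
    then show ?thesis using len_rev[of "x # e"] e that by simp
  qed
  from min_rep_exists[OF YS order.refl fS] obtain u0 g where
    ug: "u0 \<in> lists S" "g \<in> lists {r, s}" "min_rep {r, s} u0" "f \<simeq> u0 @ g" by blast
  have lfg: "len f = len u0 + len g" using len_cong[OF ug(4)] min_rep_len_add[OF YS ug(3) ug(2)] by simp
  have dsc: "len (g @ [x]) < len g" if x: "x \<in> {r, s}" "len (x # e) < len e" for x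
  proof -
    have "len (f @ [x]) = len (u0 @ (g @ [x]))"
      using len_cong[OF ceq_app_r[OF ug(4), of "[x]"]] by simp
    also have "\<dots> = len u0 + len (g @ [x])" using min_rep_len_add[OF YS ug(3)] ug(2) x by auto
    finally show ?thesis using lfx[of x] x YS lf lfg by auto
  qed
  have pd: "len (g @ v) + len v = len g"
    using dihedral_right[OF rs ug(2) dsc dsc v] desc_r desc_s by auto
  have "len (f @ v) = len (u0 @ (g @ v))"
    using len_cong[OF ceq_app_r[OF ug(4), of v]] by simp
  also have "\<dots> = len u0 + len (g @ v)" using min_rep_len_add[OF YS ug(3)] ug(2) v by auto
  finally have "len (f @ v) + len v = len f" using pd lfg by auto
  moreover have "len (rev v @ e) = len (f @ v)"
  proof -
    have "rev v @ e = rev (f @ v)" by (simp add: f_def)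
    moreover have "f @ v \<in> lists S" using fS v YS by auto
    ultimately show ?thesis using len_rev[of "f @ v"] by simp
  qed
  ultimately show ?thesis using lf by simp
qed

text \<open>The inductive step for a reduced word ending in
  two letters \<open>r s\<close> factors the prefix as \<open>z w\<close> with \<open>z\<close> minimal in \<open>z W\<^bsub>{r, s}\<^esub>\<close> and applies
  the dihedral case to \<open>e = z\<^sup>-\<^sup>1 d\<close>, whose left descents include \<open>r\<close> and \<open>s\<close> by induction.\<close>

lemma left_descents_step:
  assumes ZS: "Z \<subseteq> S" and d: "d \<in> lists S"
    and IH: "\<And>y. y \<in> lists Z \<Longrightarrow> len y < len x \<Longrightarrow> len (rev y @ d) + len y = len d"
    and x: "x = x'' @ [r, s]" "x \<in> lists Z" "len x = length x"
  shows "len (rev x @ d) + len x = len d"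
proof -
  define x' where "x' = x'' @ [r]"
  have sZ: "s \<in> Z" and rZ: "r \<in> Z" and x'Z: "x' \<in> lists Z" using x by (auto simp: x'_def)
  have sS: "s \<in> S" and rS: "r \<in> S" using sZ rZ ZS by auto
  have xS: "x \<in> lists S" using x ZS by auto
  have "refl_distinct x'"
    using refl_distinct_if_reduced[OF xS x(3)] refl_distinct_prefix x by (simp add: x'_def)
  then have lx': "len x' = length x'" using len_refl_distinct x'Z ZS by blast
  have nx: "len x = Suc (length x')" using x by (simp add: x'_def)
  have "r \<noteq> s"
    using reduced_no_square[OF xS x(3), of "length x''"] x by (auto simp: nth_append)
  define Y where "Y = {r, s}"
  have YZ: "Y \<subseteq> Z" and YS: "Y \<subseteq> S" using rZ sZ ZS by (auto simp: Y_def)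
  from min_rep_exists[OF YZ ZS x'Z] obtain z w where
    zw: "z \<in> lists Z" "w \<in> lists Y" "min_rep Y z" "x' \<simeq> z @ w" by blast
  have zS: "z \<in> lists S" using zw ZS by auto
  have len_zw: "len (x' @ v) = len z + len (w @ v)" if "v \<in> lists Y" for v
    using len_cong[OF ceq_app_r[OF zw(4), of v]] min_rep_len_add[OF YS zw(3)] zw(2) that by simp
  have lxzw: "len x' = len z + len w" using len_zw[of "[]"] by simp
  have "len (x' @ [r]) \<le> length x''"
  proof -
    have "x' @ [r] = x'' @ [r, r] @ []" by (simp add: x'_def)
    also have "\<dots> \<simeq> x'' @ [] @ []" using gen_square[OF rS] by (rule ceq_cong)
    finally have "len (x' @ [r]) = len x''" using len_cong by simp
    also have "\<dots> \<le> length x''" using x'Z ZS by (intro len_le) (auto simp: x'_def)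
    finally show ?thesis .
  qed
  then have wdr: "len (w @ [r]) < len w" using len_zw[of "[r]"] lxzw lx' by (simp add: Y_def x'_def)
  have "len (x' @ [s]) = len x" using x by (simp add: x'_def)
  then have wds: "len (w @ [s]) = Suc (len w)" using len_zw[of "[s]"] lxzw lx' nx by (simp add: Y_def)
  have nz: "len x = len z + len w + 1" using lxzw lx' nx by simp
  have Pz: "len (rev z @ d) + len z = len d" using IH[of z] zw(1) nz wdr by auto
  define e where "e = rev z @ d"
  have eS: "e \<in> lists S" using zS d by (auto simp: e_def)
  have de: "len (t # e) < len e" if t: "t \<in> Y" for t
  proof -
    have lzt: "len (z @ [t]) = Suc (len z)"
      using min_rep_ascent[OF YS zw(3) t] len_snoc_cases[OF zS, of t] t YS by auto
    have "z @ [t] \<in> lists Z" using zw t YZ by auto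
    moreover have "len (z @ [t]) < len x" using lzt nz wdr by simp
    ultimately have "len (rev (z @ [t]) @ d) + len (z @ [t]) = len d" using IH by blast
    then show ?thesis using lzt Pz by (simp add: e_def)
  qed
  have "w @ [s] \<in> lists {r, s}" using zw by (auto simp: Y_def)
  from dihedral_left[OF \<open>r \<noteq> s\<close> rS sS eS de[of r] de[of s] this]
  have A: "len (rev (w @ [s]) @ e) + Suc (len w) = len e" using wds by (simp add: Y_def)
  have "rev x @ d = [s] @ rev x' @ d" using x by (simp add: x'_def)
  also have "\<dots> \<simeq> [s] @ rev (z @ w) @ d" using ceq_rev[OF zw(4)] by (intro ceq_cong)
  also have "\<dots> = rev (w @ [s]) @ e" by (simp add: e_def)
  finally have "len (rev x @ d) = len (rev (w @ [s]) @ e)" by (rule len_cong)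
  then show ?thesis using A Pz nz by (simp add: e_def)
qed

lemma left_descents_len_sub:
  assumes ZS: "Z \<subseteq> S" and d: "d \<in> lists S" and desc: "\<forall>s\<in>Z. len (s # d) < len d"
    and x: "x \<in> lists Z"
  shows "len (rev x @ d) + len x = len d"
  using x
proof (induction "len x" arbitrary: x rule: less_induct)
  case less
  from reduced_exists[OF less.prems ZS] obtain x0 where
    x0: "x0 \<in> lists Z" "x0 \<simeq> x" "refl_distinct x0" "length x0 = len x" by auto
  have x0S: "x0 \<in> lists S" using x0 ZS by auto
  have same: "len (rev x @ d) = len (rev x0 @ d)" "len x0 = len x"
    using len_cong[OF ceq_app_r[OF ceq_rev[OF x0(2)]]] len_cong[OF x0(2)] by simp_all
  have red: "len x0 = length x0" using x0 same by simp
  consider "x0 = []" | s where "x0 = [s]" | x'' r s where "x0 = x'' @ [r, s]"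
    by (metis append.assoc append_Cons append_Nil rev_exhaust)
  then show ?case
  proof cases
    case 1 then show ?thesis using same x0 by simp
  next
    case (2 s)
    then have "s \<in> Z" "s \<in> S" using x0 ZS by auto
    then have "Suc (len (s # d)) = len d" using desc len_cons_cases[OF d] by fastforce
    then show ?thesis using same x0 2 by simp
  next
    case 3
    have "len (rev x0 @ d) + len x0 = len d"
      using left_descents_step[OF ZS d _ 3 x0(1) red] less.hyps same by simp
    then show ?thesis using same by simp
  qed
qed

lemma cox_class_cong: "v \<simeq> w \<Longrightarrow> cox_class S m v = cox_class S m w"
  unfolding cox_class_def by (auto intro: ceq_trans ceq_sym)

lemma cox_class_eqD: "u \<in> lists S \<Longrightarrow> cox_class S m u = cox_class S m w \<Longrightarrow> w \<simeq> u"
  unfolding cox_class_def by blast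

lemma finite_len_le:
  assumes fin: "finite S" and ZS: "Z \<subseteq> S"
  shows "finite {C. \<exists>w\<in>lists Z. C = cox_class S m w \<and> len w \<le> n}"
proof -
  have "{C. \<exists>w\<in>lists Z. C = cox_class S m w \<and> len w \<le> n} \<subseteq>
        cox_class S m ` {w. set w \<subseteq> Z \<and> length w \<le> n}"
  proof
    fix C assume "C \<in> {C. \<exists>w\<in>lists Z. C = cox_class S m w \<and> len w \<le> n}"
    then obtain w where w: "w \<in> lists Z" "C = cox_class S m w" "len w \<le> n" by auto
    from reduced_exists[OF w(1) ZS] obtain w' where
      w': "w' \<in> lists Z" "w' \<simeq> w" "length w' = len w" by auto
    have "C = cox_class S m w'" using w cox_class_cong[OF w'(2)] by simp
    then show "C \<in> cox_class S m ` {w. set w \<subseteq> Z \<and> length w \<le> n}" using w w' by auto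
  qed
  moreover have "finite {w. set w \<subseteq> Z \<and> length w \<le> n}"
    using fin ZS by (intro finite_lists_length_le) (auto intro: finite_subset)
  ultimately show ?thesis by (meson finite_imageI finite_subset)
qed

text \<open>Finiteness criterion: if some \<open>c \<in> W\<^sub>Z\<close> has every generator of \<open>Z\<close> as a right descent,
  then \<open>W\<^sub>Z\<close> is finite, all its lengths being bounded by \<open>\<ell>(c)\<close>.\<close>

lemma finite_if_all_descents:
  assumes fin: "finite S" and ZS: "Z \<subseteq> S" and c: "c \<in> lists Z"
    and desc: "\<forall>s\<in>Z. len (c @ [s]) < len c"
  shows "finite (special_subgroup S m Z)"
proof -
  have cS: "c \<in> lists S" using c ZS by auto
  have "\<forall>s\<in>Z. len (s # rev c) < len (rev c)"
  proof
    fix s assume s: "s \<in> Z"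
    then have "len (s # rev c) = len (c @ [s])" using len_rev[of "c @ [s]"] cS ZS by auto
    then show "len (s # rev c) < len (rev c)" using desc s len_rev[OF cS] by simp
  qed
  note bound = left_descents_len_sub[OF ZS _ this]
  have "special_subgroup S m Z \<subseteq> {C. \<exists>w\<in>lists Z. C = cox_class S m w \<and> len w \<le> len (rev c)}"
    unfolding special_subgroup_def using bound cS by fastforce
  then show ?thesis using finite_len_le[OF fin ZS] by (rule finite_subset)
qed

lemma cox_length_class:
  assumes XS: "X \<subseteq> S" and w: "w \<in> lists X"
  shows "cox_length S m X (cox_class S m w) = len w"
  unfolding cox_length_def
proof (rule Least_equality)
  from reduced_exists[OF w XS] obtain v where v: "v \<in> lists X" "v \<simeq> w" "length v = len w" by auto
  then show "\<exists>u\<in>lists X. cox_class S m u = cox_class S m w \<and> length u = len w"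
    using cox_class_cong by blast
  fix n assume "\<exists>u\<in>lists X. cox_class S m u = cox_class S m w \<and> length u = n"
  then obtain u where u: "u \<in> lists X" "cox_class S m u = cox_class S m w" "length u = n" by auto
  have uS: "u \<in> lists S" using u XS by auto
  have "w \<simeq> u" using cox_class_eqD[OF uS u(2)] .
  then have "len w = len u" by (rule len_cong)
  also have "\<dots> \<le> length u" using len_le[OF uS] .
  finally show "len w \<le> n" using u by simp
qed

definition glen :: "'a list set \<Rightarrow> nat" where "glen C = cox_length S m S C"

lemma glen_class: "w \<in> lists S \<Longrightarrow> glen (cox_class S m w) = len w"
  unfolding glen_def using cox_length_class[OF order.refl] .

lemma cox_length_eq_glen: "X \<subseteq> S \<Longrightarrow> C \<in> special_subgroup S m X \<Longrightarrow> cox_length S m X C = glen C"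
proof -
  assume XS: "X \<subseteq> S" and "C \<in> special_subgroup S m X"
  then obtain w where w: "w \<in> lists X" "C = cox_class S m w" unfolding special_subgroup_def by auto
  then have "w \<in> lists S" using XS by auto
  then show ?thesis using cox_length_class[OF XS w(1)] glen_class w by simp
qed

text \<open>The elements of \<open>W\<^sub>Z\<close> of length \<open>n\<close>, and those among them that are minimal in
  their coset modulo \<open>W\<^sub>Y\<close>; the latter have the generating function \<open>W\<^sub>Z\<^sup>Y(t)\<close>.\<close>

definition sphere :: "'a set \<Rightarrow> nat \<Rightarrow> 'a list set set" where
  "sphere Z n = {C \<in> special_subgroup S m Z. glen C = n}"

definition min_coset :: "'a set \<Rightarrow> 'a list set \<Rightarrow> bool" where
  "min_coset Y C \<longleftrightarrow> (\<exists>w\<in>lists S. C = cox_class S m w \<and> min_rep Y w)"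

definition min_sphere :: "'a set \<Rightarrow> 'a set \<Rightarrow> nat \<Rightarrow> 'a list set set" where
  "min_sphere Z Y n = {C \<in> special_subgroup S m Z. min_coset Y C \<and> glen C = n}"

lemma min_coset_iff: "w \<in> lists S \<Longrightarrow> min_coset Y (cox_class S m w) \<longleftrightarrow> min_rep Y w"
  unfolding min_coset_def using cox_class_eqD min_rep_cong by (metis ceq_sym)

lemma finite_sphere:
  assumes fin: "finite S" and ZS: "Z \<subseteq> S"
  shows "finite (sphere Z n)"
proof -
  have "sphere Z n \<subseteq> {C. \<exists>w\<in>lists Z. C = cox_class S m w \<and> len w \<le> n}"
    unfolding sphere_def special_subgroup_def using glen_class ZS by fastforce
  then show ?thesis using finite_len_le[OF fin ZS] by (rule finite_subset)
qed

definition rep :: "'a list set \<Rightarrow> 'a list" where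
  "rep C = (SOME w. w \<in> lists S \<and> cox_class S m w = C)"

lemma rep:
  assumes "w \<in> lists S" "C = cox_class S m w"
  shows "rep C \<in> lists S" "cox_class S m (rep C) = C" "rep C \<simeq> w"
proof -
  have ex: "\<exists>v. v \<in> lists S \<and> cox_class S m v = C" using assms by auto
  show a: "rep C \<in> lists S" "cox_class S m (rep C) = C" unfolding rep_def using someI_ex[OF ex] by auto
  show "rep C \<simeq> w" using cox_class_eqD[OF assms(1)] a assms(2) by (metis ceq_sym)
qed

definition mul_class :: "'a list set \<Rightarrow> 'a list set \<Rightarrow> 'a list set" where
  "mul_class C1 C2 = cox_class S m (rep C1 @ rep C2)"

lemma mul_class:
  "u \<in> lists S \<Longrightarrow> v \<in> lists S \<Longrightarrow> mul_class (cox_class S m u) (cox_class S m v) = cox_class S m (u @ v)"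
  unfolding mul_class_def using rep(3) by (intro cox_class_cong ceq_app) auto

text \<open>The factorisation \<open>W\<^sub>Z = W\<^sub>Z\<^sup>Y \<cdot> W\<^sub>Y\<close>, graded by length: multiplication is a bijection from
  pairs (minimal representative of length \<open>k\<close>, element of \<open>W\<^sub>Y\<close> of length \<open>n - k\<close>) onto the
  elements of \<open>W\<^sub>Z\<close> of length \<open>n\<close>.\<close>

lemma sphere_factor_inj:
  assumes YS: "Y \<subseteq> S"
  shows "inj_on (\<lambda>(k, C1, C2). mul_class C1 C2) (SIGMA k:{0..n}. min_sphere Z Y k \<times> sphere Y (n - k))"
proof (rule inj_onI, clarsimp)
  fix k C1 C2 k' C1' C2'
  assume C1: "C1 \<in> min_sphere Z Y k" and C2: "C2 \<in> sphere Y (n - k)"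
    and C1': "C1' \<in> min_sphere Z Y k'" and C2': "C2' \<in> sphere Y (n - k')"
    and eq: "mul_class C1 C2 = mul_class C1' C2'"
  from C1 obtain u where u: "u \<in> lists S" "C1 = cox_class S m u" "min_rep Y u" "glen C1 = k"
    unfolding min_sphere_def min_coset_def by auto
  from C1' obtain u' where u': "u' \<in> lists S" "C1' = cox_class S m u'" "min_rep Y u'" "glen C1' = k'"
    unfolding min_sphere_def min_coset_def by auto
  from C2 obtain v where v: "v \<in> lists Y" "C2 = cox_class S m v"
    unfolding sphere_def special_subgroup_def by auto
  from C2' obtain v' where v': "v' \<in> lists Y" "C2' = cox_class S m v'"
    unfolding sphere_def special_subgroup_def by auto
  have vS: "v \<in> lists S" and v'S: "v' \<in> lists S" using v v' YS by auto
  have "cox_class S m (u @ v) = cox_class S m (u' @ v')"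
    using eq u v u' v' by (simp add: mul_class[OF u(1) vS] mul_class[OF u'(1) v'S])
  moreover have "u @ v \<in> lists S" using u(1) vS by auto
  ultimately have "u' @ v' \<simeq> u @ v" using cox_class_eqD[of "u @ v" "u' @ v'"] by auto
  from min_rep_unique[OF YS u'(3) u(3) v'(1) v(1) this] have "u' \<simeq> u" "v' \<simeq> v" by auto
  then have "C1 = C1'" "C2 = C2'" using u u' v v' by (auto simp: cox_class_cong)
  then show "k = k' \<and> C1 = C1' \<and> C2 = C2'" using u u' by simp
qed

lemma sphere_factor_image:
  assumes YZ: "Y \<subseteq> Z" and ZS: "Z \<subseteq> S"
  shows "(\<lambda>(k, C1, C2). mul_class C1 C2) ` (SIGMA k:{0..n}. min_sphere Z Y k \<times> sphere Y (n - k)) = sphere Z n"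
proof (rule set_eqI, rule iffI)
  have YS: "Y \<subseteq> S" using YZ ZS by auto
  fix C assume "C \<in> (\<lambda>(k, C1, C2). mul_class C1 C2) ` (SIGMA k:{0..n}. min_sphere Z Y k \<times> sphere Y (n - k))"
  then obtain k C1 C2 where a: "k \<in> {0..n}" "C1 \<in> min_sphere Z Y k" "C2 \<in> sphere Y (n - k)" "C = mul_class C1 C2"
    by auto
  from a(2) obtain u where u: "u \<in> lists Z" "C1 = cox_class S m u" "glen C1 = k"
    unfolding min_sphere_def special_subgroup_def by auto
  have uS: "u \<in> lists S" using u ZS by auto
  have mu: "min_rep Y u" using a(2) u min_coset_iff[OF uS] unfolding min_sphere_def by auto
  from a(3) obtain v where v: "v \<in> lists Y" "C2 = cox_class S m v" "glen C2 = n - k"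
    unfolding sphere_def special_subgroup_def by auto
  have vS: "v \<in> lists S" using v YS by auto
  have C: "C = cox_class S m (u @ v)" using a(4) u v mul_class[OF uS vS] by simp
  have "glen C = len (u @ v)" using C glen_class uS vS by simp
  also have "\<dots> = len u + len v" using min_rep_len_add[OF YS mu v(1)] .
  also have "\<dots> = n" using u v glen_class uS vS a(1) by auto
  moreover have "u @ v \<in> lists Z" using u v YZ by auto
  ultimately show "C \<in> sphere Z n" unfolding sphere_def special_subgroup_def using C by auto
next
  have YS: "Y \<subseteq> S" using YZ ZS by auto
  fix C assume "C \<in> sphere Z n"
  then obtain c where c: "c \<in> lists Z" "C = cox_class S m c" "glen C = n"
    unfolding sphere_def special_subgroup_def by auto
  from min_rep_exists[OF YZ ZS c(1)] obtain u v where
    uv: "u \<in> lists Z" "v \<in> lists Y" "min_rep Y u" "c \<simeq> u @ v" by blast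
  have uS: "u \<in> lists S" and vS: "v \<in> lists S" and cS: "c \<in> lists S" using uv c YZ ZS by auto
  have ln: "len u + len v = n"
    using c glen_class[OF cS] len_cong[OF uv(4)] min_rep_len_add[OF YS uv(3) uv(2)] by simp
  have "cox_class S m u \<in> min_sphere Z Y (len u)"
    unfolding min_sphere_def special_subgroup_def using uv min_coset_iff[OF uS] glen_class[OF uS] by auto
  moreover have "cox_class S m v \<in> sphere Y (n - len u)"
    unfolding sphere_def special_subgroup_def using uv glen_class[OF vS] ln by auto
  moreover have "C = mul_class (cox_class S m u) (cox_class S m v)"
    using c cox_class_cong[OF uv(4)] mul_class[OF uS vS] by simp
  ultimately show "C \<in> (\<lambda>(k, C1, C2). mul_class C1 C2) ` (SIGMA k:{0..n}. min_sphere Z Y k \<times> sphere Y (n - k))"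
    using ln by (intro image_eqI[of _ _ "(len u, cox_class S m u, cox_class S m v)"]) auto
qed

lemma card_sphere_factor:
  assumes fin: "finite S" and YZ: "Y \<subseteq> Z" and ZS: "Z \<subseteq> S"
  shows "card (sphere Z n) = (\<Sum>k=0..n. card (min_sphere Z Y k) * card (sphere Y (n - k)))"
proof -
  have YS: "Y \<subseteq> S" using YZ ZS by auto
  have finB: "finite (min_sphere Z Y k)" for k
    by (rule finite_subset[OF _ finite_sphere[OF fin ZS, of k]]) (auto simp: min_sphere_def sphere_def)
  have "card (sphere Z n) =
      card ((\<lambda>(k, C1, C2). mul_class C1 C2) ` (SIGMA k:{0..n}. min_sphere Z Y k \<times> sphere Y (n - k)))"
    using sphere_factor_image[OF YZ ZS, of n] by simp
  also have "\<dots> = card (SIGMA k:{0..n}. min_sphere Z Y k \<times> sphere Y (n - k))"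
    by (rule card_image[OF sphere_factor_inj[OF YS]])
  also have "\<dots> = (\<Sum>k=0..n. card (min_sphere Z Y k \<times> sphere Y (n - k)))"
    by (rule card_SigmaI) (auto intro: finB finite_sphere[OF fin YS])
  also have "\<dots> = (\<Sum>k=0..n. card (min_sphere Z Y k) * card (sphere Y (n - k)))"
    by (simp add: card_cartesian_product)
  finally show ?thesis .
qed

text \<open>If \<open>W\<^sub>Z\<close> is infinite, every \<open>c \<in> W\<^sub>Z\<close> has a nonempty set \<open>A\<close> of ascents in \<open>Z\<close>, and
  \<open>c\<close> is minimal in \<open>c W\<^sub>Y\<close> exactly for \<open>Y \<subseteq> A\<close>; so the signed count over these \<open>Y\<close> vanishes.\<close>

lemma min_rep_alternating:
  assumes fin: "finite S" and ZS: "Z \<subseteq> S" and inf: "infinite (special_subgroup S m Z)"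
    and c: "c \<in> lists Z"
  shows "(\<Sum>Y\<in>{Y \<in> Pow Z. min_rep Y c}. (-1::rat) ^ card Y) = 0"
proof -
  have cS: "c \<in> lists S" using c ZS by auto
  define A where "A = {s \<in> Z. len c < len (c @ [s])}"
  have "min_rep Y c \<longleftrightarrow> Y \<subseteq> A" if "Y \<subseteq> Z" for Y
    using min_rep_if_ascents[OF _ cS, of Y] min_rep_ascent[of Y c] that ZS unfolding A_def by auto
  then have "{Y \<in> Pow Z. min_rep Y c} = Pow A" unfolding A_def by auto
  moreover have "A \<noteq> {}"
  proof
    assume "A = {}"
    then have "\<forall>s\<in>Z. len (c @ [s]) < len c"
      using len_snoc_cases[OF cS] ZS unfolding A_def by fastforce
    from finite_if_all_descents[OF fin ZS c this] inf show False by simp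
  qed
  then obtain a where "a \<in> A" by blast
  moreover have "finite A" using finite_subset[OF ZS fin] by (simp add: A_def)
  ultimately show ?thesis using alternating_Pow[of A a] by simp
qed

lemma alternating_min_sphere:
  assumes fin: "finite S" and ZS: "Z \<subseteq> S" and inf: "infinite (special_subgroup S m Z)"
  shows "(\<Sum>Y\<in>Pow Z. (-1::rat) ^ card Y * of_nat (card (min_sphere Z Y n))) = 0"
proof -
  have finZ: "finite Z" using fin ZS finite_subset by auto
  have finT: "finite (sphere Z n)" using finite_sphere[OF fin ZS] .
  have "(\<Sum>Y\<in>Pow Z. (-1::rat) ^ card Y * of_nat (card (min_sphere Z Y n))) =
        (\<Sum>Y\<in>Pow Z. \<Sum>C\<in>{C \<in> sphere Z n. min_coset Y C}. (-1::rat) ^ card Y)"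
  proof (rule sum.cong)
    fix Y
    have "min_sphere Z Y n = {C \<in> sphere Z n. min_coset Y C}" unfolding min_sphere_def sphere_def by auto
    then show "(-1::rat) ^ card Y * of_nat (card (min_sphere Z Y n)) =
        (\<Sum>C\<in>{C \<in> sphere Z n. min_coset Y C}. (-1::rat) ^ card Y)" by simp
  qed simp
  also have "\<dots> = (\<Sum>C\<in>sphere Z n. \<Sum>Y\<in>{Y \<in> Pow Z. min_coset Y C}. (-1::rat) ^ card Y)"
    using finZ finT by (intro sum.swap_restrict) auto
  also have "\<dots> = (\<Sum>C\<in>sphere Z n. 0)"
  proof (rule sum.cong)
    fix C assume "C \<in> sphere Z n"
    then obtain c where c: "c \<in> lists Z" "C = cox_class S m c"
      unfolding sphere_def special_subgroup_def by auto
    have "c \<in> lists S" using c ZS by auto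
    then have "{Y \<in> Pow Z. min_coset Y C} = {Y \<in> Pow Z. min_rep Y c}" using min_coset_iff c by simp
    then show "(\<Sum>Y\<in>{Y \<in> Pow Z. min_coset Y C}. (-1::rat) ^ card Y) = 0"
      using min_rep_alternating[OF fin ZS inf c(1)] by simp
  qed simp
  finally show ?thesis by simp
qed

lemma poincare_fps_sphere: "Z \<subseteq> S \<Longrightarrow> poincare_fps S m Z = Abs_fps (\<lambda>n. of_nat (card (sphere Z n)))"
  unfolding poincare_fps_def sphere_def using cox_length_eq_glen by (metis (no_types, lifting) Collect_cong)

definition min_rep_fps :: "'a set \<Rightarrow> 'a set \<Rightarrow> rat fps" where
  "min_rep_fps Z Y = Abs_fps (\<lambda>n. of_nat (card (min_sphere Z Y n)))"

lemma poincare_fps_factor: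
  assumes "finite S" "Y \<subseteq> Z" "Z \<subseteq> S"
  shows "poincare_fps S m Z = min_rep_fps Z Y * poincare_fps S m Y"
proof -
  have YS: "Y \<subseteq> S" using assms by auto
  show ?thesis
    unfolding poincare_fps_sphere[OF assms(3)] poincare_fps_sphere[OF YS] min_rep_fps_def
    by (rule fps_ext) (simp add: fps_mult_nth card_sphere_factor[OF assms])
qed

text \<open>\<open>W\<^sub>Y(t)\<close> has constant term \<open>1\<close> (only the identity has length \<open>0\<close>), so it is invertible.\<close>

lemma poincare_fps_nth_0:
  assumes YS: "Y \<subseteq> S"
  shows "poincare_fps S m Y $ 0 = 1"
proof -
  have "sphere Y 0 = {cox_class S m []}"
  proof (rule set_eqI, rule iffI)
    fix C assume "C \<in> sphere Y 0"
    then obtain w where w: "w \<in> lists Y" "C = cox_class S m w" "glen C = 0"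
      unfolding sphere_def special_subgroup_def by auto
    have wS: "w \<in> lists S" using w YS by auto
    then have "w \<simeq> []" using w glen_class by (intro len0) auto
    then show "C \<in> {cox_class S m []}" using w cox_class_cong by auto
  next
    fix C assume "C \<in> {cox_class S m []}"
    then show "C \<in> sphere Y 0" unfolding sphere_def special_subgroup_def using glen_class[of "[]"] by auto
  qed
  then show ?thesis unfolding poincare_fps_sphere[OF YS] by simp
qed

text \<open>For infinite \<open>W\<^sub>Z\<close>: \<open>\<Sum>\<^sub>Y\<^sub>\<subseteq>\<^sub>Z (-1)\<^bsup>|Y|\<^esup> / W\<^sub>Y(t) = 0\<close>, obtained by dividing the
  vanishing alternating sum of the \<open>W\<^sub>Z\<^sup>Y(t) = W\<^sub>Z(t) / W\<^sub>Y(t)\<close> by \<open>W\<^sub>Z(t)\<close>.\<close>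

lemma alternating_inverse_poincare:
  assumes fin: "finite S" and ZS: "Z \<subseteq> S" and inf: "infinite (special_subgroup S m Z)"
  shows "(\<Sum>Y\<in>Pow Z. fps_const ((-1::rat) ^ card Y) * inverse (poincare_fps S m Y)) = 0"
proof -
  let ?F = "poincare_fps S m"
  have s0: "(\<Sum>Y\<in>Pow Z. fps_const ((-1::rat) ^ card Y) * min_rep_fps Z Y) = 0"
    by (rule fps_ext) (simp add: fps_sum_nth min_rep_fps_def alternating_min_sphere[OF assms])
  have B: "min_rep_fps Z Y = ?F Z * inverse (?F Y)" if "Y \<in> Pow Z" for Y
  proof -
    have YS: "Y \<subseteq> S" using that ZS by auto
    have "?F Z * inverse (?F Y) = min_rep_fps Z Y * (?F Y * inverse (?F Y))"
      using poincare_fps_factor[OF fin _ ZS, of Y] that by (simp add: mult.assoc)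
    also have "?F Y * inverse (?F Y) = 1" using poincare_fps_nth_0[OF YS] by (intro inverse_mult_eq_1') simp
    finally show ?thesis by simp
  qed
  have "?F Z * (\<Sum>Y\<in>Pow Z. fps_const ((-1::rat) ^ card Y) * inverse (?F Y)) =
        (\<Sum>Y\<in>Pow Z. fps_const ((-1::rat) ^ card Y) * min_rep_fps Z Y)"
    by (simp add: sum_distrib_left B mult.left_commute)
  also have "\<dots> = 0" by (rule s0)
  finally have "?F Z * (\<Sum>Y\<in>Pow Z. fps_const ((-1::rat) ^ card Y) * inverse (?F Y)) = 0" .
  moreover have "?F Z \<noteq> 0" using poincare_fps_nth_0[OF ZS] by (metis fps_zero_nth one_neq_zero)
  ultimately show ?thesis by simp
qed

lemma poincare_fps_finite:
  assumes ZS: "Z \<subseteq> S" and fW: "finite (special_subgroup S m Z)"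
  shows "poincare_fps S m Z = fps_of_poly (poincare_poly S m Z)"
proof (rule fps_ext)
  fix n
  have "fps_of_poly (poincare_poly S m Z) $ n =
        (\<Sum>c\<in>special_subgroup S m Z. if cox_length S m Z c = n then 1 else 0)"
    unfolding poincare_poly_def by (simp add: coeff_sum coeff_monom eq_commute)
  also have "\<dots> = (\<Sum>c\<in>{c \<in> special_subgroup S m Z. cox_length S m Z c = n}. (1::rat))"
    by (rule sum.inter_filter[OF fW, symmetric])
  also have "\<dots> = poincare_fps S m Z $ n" unfolding poincare_fps_def by simp
  finally show "poincare_fps S m Z $ n = fps_of_poly (poincare_poly S m Z) $ n" by simp
qed

lemma inverse_poincare_recursion:
  assumes fin: "finite S" and ZS: "Z \<subseteq> S" and inf: "infinite (special_subgroup S m Z)"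
  shows "inverse (poincare_fps S m Z) =
    fps_const (- ((-1) ^ card Z)) * (\<Sum>Y\<in>Pow Z - {Z}. fps_const ((-1::rat) ^ card Y) * inverse (poincare_fps S m Y))"
proof -
  let ?c = "\<lambda>Y. fps_const ((-1::rat) ^ card Y)"
  let ?G = "\<lambda>Y. ?c Y * inverse (poincare_fps S m Y)"
  have "finite Z" using fin ZS finite_subset by auto
  then have "?G Z + (\<Sum>Y\<in>Pow Z - {Z}. ?G Y) = 0"
    using alternating_inverse_poincare[OF assms] sum.remove[of "Pow Z" Z ?G] by simp
  then have G: "?G Z = - (\<Sum>Y\<in>Pow Z - {Z}. ?G Y)" by (simp add: eq_neg_iff_add_eq_0)
  have "?c Z * ?c Z = 1" by (simp flip: power_mult_distrib)
  then have "inverse (poincare_fps S m Z) = ?c Z * ?G Z" by (simp add: mult.assoc[symmetric])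
  then show ?thesis using G by (simp del: fps_const_neg add: fps_const_neg[symmetric])
qed

lemma fps_of_poly_lincomb:
  assumes "finite A" "\<And>a. a \<in> A \<Longrightarrow> \<exists>Q. f a = fps_of_poly Q"
  shows "\<exists>Q. (\<Sum>a\<in>A. fps_const (c a) * f a) = fps_of_poly (Q :: 'b::comm_ring_1 poly)"
  using assms
proof (induction A rule: finite_induct)
  case empty then show ?case by (auto intro: exI[of _ 0])
next
  case (insert a A)
  obtain P where "(\<Sum>a\<in>A. fps_const (c a) * f a) = fps_of_poly P" using insert by blast
  moreover obtain Q where "f a = fps_of_poly Q" using insert by blast
  ultimately show ?case using insert
    by (intro exI[of _ "smult (c a) Q + P"]) (simp add: fps_of_poly_add fps_of_poly_smult)
qed

text \<open>For finite \<open>W\<^sub>Z\<close> this is divisibility;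
  otherwise it follows from the recursion and the induction hypothesis for \<open>Y \<subset> Z\<close>.\<close>

lemma poincare_divides:
  assumes fin: "finite S" and ZS: "Z \<subseteq> S"
    and dvd: "\<And>Y. Y \<subseteq> Z \<Longrightarrow> finite (special_subgroup S m Y) \<Longrightarrow> poincare_poly S m Y dvd L"
  shows "\<exists>Q. fps_of_poly L * inverse (poincare_fps S m Z) = fps_of_poly Q"
  using ZS dvd
proof (induction "card Z" arbitrary: Z rule: less_induct)
  case less
  let ?F = "poincare_fps S m"
  have inv: "?F Z * inverse (?F Z) = 1" using poincare_fps_nth_0[OF less.prems(1)] by (simp add: inverse_mult_eq_1')
  show ?case
  proof (cases "finite (special_subgroup S m Z)")
    case True
    then obtain Q where "L = poincare_poly S m Z * Q" using less.prems by blast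
    then have "fps_of_poly L = ?F Z * fps_of_poly Q"
      using poincare_fps_finite[OF less.prems(1) True] by (simp add: fps_of_poly_mult)
    then show ?thesis using inv by (intro exI[of _ Q]) (simp add: mult.commute mult.left_commute)
  next
    case False
    have finZ: "finite Z" using fin less.prems(1) finite_subset by auto
    have finP: "finite (Pow Z - {Z})" using finZ by simp
    have proper: "\<exists>Q. fps_of_poly L * inverse (?F Y) = fps_of_poly Q" if "Y \<in> Pow Z - {Z}" for Y
    proof (rule less.hyps)
      show "card Y < card Z" using that finZ by (intro psubset_card_mono) auto
    qed (use that less.prems in auto)
    have "\<exists>R. (\<Sum>Y\<in>Pow Z - {Z}. fps_const ((-1::rat) ^ card Y) * (fps_of_poly L * inverse (?F Y)))
        = fps_of_poly R"
      by (rule fps_of_poly_lincomb[OF finP proper])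
    then obtain R where R: "(\<Sum>Y\<in>Pow Z - {Z}. fps_const ((-1::rat) ^ card Y) * (fps_of_poly L * inverse (?F Y)))
        = fps_of_poly R" ..
    have "fps_of_poly L * inverse (?F Z) = fps_const (- ((-1) ^ card Z)) *
        (\<Sum>Y\<in>Pow Z - {Z}. fps_const ((-1::rat) ^ card Y) * (fps_of_poly L * inverse (?F Y)))"
      unfolding inverse_poincare_recursion[OF fin less.prems(1) False]
      by (simp add: sum_distrib_left mult_ac)
    also have "\<dots> = fps_of_poly (smult (- ((-1) ^ card Z)) R)" using R by (simp add: fps_of_poly_smult)
    finally show ?thesis by blast
  qed
qed

text \<open>\<open>Virg(S)\<close> is a common multiple of the Poincar\'e polynomials of all finite special
  subgroups, since \<open>W = W\<^sub>S\<close> itself is infinite.\<close>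

lemma poincare_poly_dvd_virg:
  assumes "infinite (special_subgroup S m S)" "Y \<subseteq> S" "finite (special_subgroup S m Y)"
  shows "poincare_poly S m Y dvd virg S m"
  unfolding virg_def using assms by (intro dvd_Lcm) auto

end

theorem mainTheorem4:
  fixes D :: "'a set" and m :: "'a \<Rightarrow> 'a \<Rightarrow> enat"
  assumes "finite D" and "is_coxeter_matrix D m"
    and "infinite (special_subgroup D m D)"
  shows "\<exists>Q :: rat poly. fps_of_poly (virg D m) = fps_of_poly Q * poincare_fps D m D"
proof -
  interpret coxeter_system D m using assms(2) by unfold_locales
  obtain Q where Q: "fps_of_poly (virg D m) * inverse (poincare_fps D m D) = fps_of_poly Q"
    using poincare_divides[OF assms(1) order.refl poincare_poly_dvd_virg[OF assms(3)]] by blast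
  have "inverse (poincare_fps D m D) * poincare_fps D m D = 1"
    using poincare_fps_nth_0[OF order.refl] by (simp add: inverse_mult_eq_1)
  then have "fps_of_poly (virg D m) = fps_of_poly (virg D m) * inverse (poincare_fps D m D) * poincare_fps D m D"
    by (simp add: mult.assoc)
  then have "fps_of_poly (virg D m) = fps_of_poly Q * poincare_fps D m D" using Q by simp
  then show ?thesis ..
qed

end
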